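(* Let $P$ be a minuscule poset, i.e., a finite poset each of whose connected components is isomorphic to one of: (a) $\mathbf{a}\times\mathbf{b}$ for $a,b\ge1$; (b) the interval $[\varnothing,(b,b)]$ of Young's lattice for $b\ge1$; (c) $P_{a,1,1,a}$ for $a\ge1$; (d) $P(E_6)$ or $P(E_7)$. Then the minuscule lattice $J(P)$ is tCDE.
   Context: $\mathbf{a}$ is the chain with $a$ elements; $\times$ is the direct product. Young's lattice is the set of partitions ordered by $\nu\subseteq\lambda$ iff $\nu_i\le\lambda_i$ for all $i$. $P_{a,1,1,a}$ is the poset on $w_1,\ldots,w_a,x_1,y_1,z_1,\ldots,z_a$ with cover relations $w_1\lessdot\cdots\lessdot w_a$, $w_a\lessdot x_1$, $w_a\lessdot y_1$, $x_1\lessdot z_1$, $y_1\lessdot z_1$, $z_1\lessdot\cdots\lessdot z_a$. $P^{\mathrm{shift}}_{\delta_4}$ is the set of boxes $[i,j]$ with $1\le i\le j\le4$, ordered by $[i,j]\le[i',j']$ iff $i\le i'$, $j\le j'$; $P(E_6):=J(P^{\mathrm{shift}}_{\delta_4})$ (16 elements) and $P(E_7):=J(P(E_6))$ (27 elements). (These are the connected minuscule posets arising from minuscule representations of semisimple Lie algebras.) $J(Q)$ is the lattice of order ideals of $Q$ under inclusion; $\mathrm{ddeg}$ is the number of covered elements; $\mathrm{uni}$ is uniform. $\mathcal{T}^+_p(I)=1$ iff $p\notin I$ and $p$ minimal in $P\setminus I$; $\mathcal{T}^-_p(I)=1$ iff $p\in I$ and $p$ maximal in $I$. $\mu$ is toggle-symmetric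 if $\mathbb{E}(\mu;\mathcal{T}^+_p)=\mathbb{E}(\mu;\mathcal{T}^-_p)$ for all $p$; $J(P)$ is tCDE if $\mathbb{E}(\mu;\mathrm{ddeg})=\mathbb{E}(\mathrm{uni}_{J(P)};\mathrm{ddeg})$ for every toggle-symmetric $\mu$ on $J(P)$. *)

theory Defs
  imports Complex_Main
begin

definition is_poset :: "'a set \<Rightarrow> ('a \<Rightarrow> 'a \<Rightarrow> bool) \<Rightarrow> bool" where
  "is_poset P le \<longleftrightarrow> (\<forall>x\<in>P. le x x) \<and>
     (\<forall>x\<in>P. \<forall>y\<in>P. le x y \<and> le y x \<longrightarrow> x = y) \<and>
     (\<forall>x\<in>P. \<forall>y\<in>P. \<forall>z\<in>P. le x y \<and> le y z \<longrightarrow> le x z)"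

definition order_iso :: "'a set \<Rightarrow> ('a \<Rightarrow> 'a \<Rightarrow> bool) \<Rightarrow> 'b set \<Rightarrow> ('b \<Rightarrow> 'b \<Rightarrow> bool) \<Rightarrow> ('a \<Rightarrow> 'b) \<Rightarrow> bool" where
  "order_iso P le Q le' f \<longleftrightarrow> bij_betw f P Q \<and> (\<forall>x\<in>P. \<forall>y\<in>P. le x y \<longleftrightarrow> le' (f x) (f y))"

definition poset_isomorphic :: "'a set \<Rightarrow> ('a \<Rightarrow> 'a \<Rightarrow> bool) \<Rightarrow> 'b set \<Rightarrow> ('b \<Rightarrow> 'b \<Rightarrow> bool) \<Rightarrow> bool" where
  "poset_isomorphic P le Q le' \<longleftrightarrow> (\<exists>f. order_iso P le Q le' f)"

definition comp_rel :: "'a set \<Rightarrow> ('a \<Rightarrow> 'a \<Rightarrow> bool) \<Rightarrow> 'a \<Rightarrow> 'a \<Rightarrow> bool" where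
  "comp_rel P le x y \<longleftrightarrow> x \<in> P \<and> y \<in> P \<and> (le x y \<or> le y x)"

definition component :: "'a set \<Rightarrow> ('a \<Rightarrow> 'a \<Rightarrow> bool) \<Rightarrow> 'a \<Rightarrow> 'a set" where
  "component P le x = {y. (comp_rel P le)\<^sup>*\<^sup>* x y}"

definition components :: "'a set \<Rightarrow> ('a \<Rightarrow> 'a \<Rightarrow> bool) \<Rightarrow> 'a set set" where
  "components P le = component P le ` P"

definition order_ideals :: "'a set \<Rightarrow> ('a \<Rightarrow> 'a \<Rightarrow> bool) \<Rightarrow> 'a set set" where
  "order_ideals P le = {I. I \<subseteq> P \<and> (\<forall>x\<in>I. \<forall>y\<in>P. le y x \<longrightarrow> y \<in> I)}"

definition chain_prod :: "nat \<Rightarrow> nat \<Rightarrow> (nat \<times> nat) set" where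
  "chain_prod a b = {(i, j). 1 \<le> i \<and> i \<le> a \<and> 1 \<le> j \<and> j \<le> b}"

definition prod_le :: "nat \<times> nat \<Rightarrow> nat \<times> nat \<Rightarrow> bool" where
  "prod_le p q \<longleftrightarrow> fst p \<le> fst q \<and> snd p \<le> snd q"

definition part :: "nat list \<Rightarrow> nat \<Rightarrow> nat" where
  "part xs i = (if i < length xs then xs ! i else 0)"

definition is_partition :: "nat list \<Rightarrow> bool" where
  "is_partition xs \<longleftrightarrow> sorted_wrt (\<ge>) xs \<and> 0 \<notin> set xs"

definition young_le :: "nat list \<Rightarrow> nat list \<Rightarrow> bool" where
  "young_le \<nu> \<kappa> \<longleftrightarrow> (\<forall>i. part \<nu> i \<le> part \<kappa> i)"

definition young_interval :: "nat \<Rightarrow> nat list set" where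
  "young_interval b = {\<nu>. is_partition \<nu> \<and> young_le \<nu> [b, b]}"

datatype paa_elem = W nat | X | Y | Z nat

definition paa_carrier :: "nat \<Rightarrow> paa_elem set" where
  "paa_carrier a = {W i | i. 1 \<le> i \<and> i \<le> a} \<union> {X, Y} \<union> {Z i | i. 1 \<le> i \<and> i \<le> a}"

definition paa_cover :: "nat \<Rightarrow> paa_elem \<Rightarrow> paa_elem \<Rightarrow> bool" where
  "paa_cover a u v \<longleftrightarrow>
     (\<exists>i. 1 \<le> i \<and> i < a \<and> u = W i \<and> v = W (Suc i)) \<or>
     (u = W a \<and> v = X) \<or> (u = W a \<and> v = Y) \<or>
     (u = X \<and> v = Z 1) \<or> (u = Y \<and> v = Z 1) \<or>
     (\<exists>i. 1 \<le> i \<and> i < a \<and> u = Z i \<and> v = Z (Suc i))"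

definition paa_le :: "nat \<Rightarrow> paa_elem \<Rightarrow> paa_elem \<Rightarrow> bool" where
  "paa_le a = (paa_cover a)\<^sup>*\<^sup>*"

definition shift_delta4 :: "(nat \<times> nat) set" where
  "shift_delta4 = {(i, j). 1 \<le> i \<and> i \<le> j \<and> j \<le> 4}"

definition PE6 :: "(nat \<times> nat) set set" where
  "PE6 = order_ideals shift_delta4 prod_le"

definition PE7 :: "(nat \<times> nat) set set set" where
  "PE7 = order_ideals PE6 (\<subseteq>)"

definition minuscule_connected :: "'a set \<Rightarrow> ('a \<Rightarrow> 'a \<Rightarrow> bool) \<Rightarrow> bool" where
  "minuscule_connected C le \<longleftrightarrow>
     (\<exists>a b. 1 \<le> a \<and> 1 \<le> b \<and> poset_isomorphic C le (chain_prod a b) prod_le) \<or>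
     (\<exists>b. 1 \<le> b \<and> poset_isomorphic C le (young_interval b) young_le) \<or>
     (\<exists>a. 1 \<le> a \<and> poset_isomorphic C le (paa_carrier a) (paa_le a)) \<or>
     poset_isomorphic C le PE6 (\<subseteq>) \<or>
     poset_isomorphic C le PE7 (\<subseteq>)"

definition minuscule_poset :: "'a set \<Rightarrow> ('a \<Rightarrow> 'a \<Rightarrow> bool) \<Rightarrow> bool" where
  "minuscule_poset P le \<longleftrightarrow> finite P \<and> is_poset P le \<and>
     (\<forall>C\<in>components P le. minuscule_connected C le)"

definition expect :: "'b set \<Rightarrow> ('b \<Rightarrow> real) \<Rightarrow> ('b \<Rightarrow> real) \<Rightarrow> real" where
  "expect L \<mu> f = (\<Sum>I\<in>L. \<mu> I * f I)"

definition is_distribution :: "'b set \<Rightarrow> ('b \<Rightarrow> real) \<Rightarrow> bool" where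
  "is_distribution L \<mu> \<longleftrightarrow> (\<forall>I\<in>L. 0 \<le> \<mu> I) \<and> sum \<mu> L = 1"

definition uniform :: "'b set \<Rightarrow> 'b \<Rightarrow> real" where
  "uniform L = (\<lambda>_. 1 / real (card L))"

definition toggle_plus :: "'a set \<Rightarrow> ('a \<Rightarrow> 'a \<Rightarrow> bool) \<Rightarrow> 'a \<Rightarrow> 'a set \<Rightarrow> real" where
  "toggle_plus P le p I =
     (if p \<in> P - I \<and> (\<forall>q\<in>P - I. le q p \<longrightarrow> q = p) then 1 else 0)"

definition toggle_minus :: "'a set \<Rightarrow> ('a \<Rightarrow> 'a \<Rightarrow> bool) \<Rightarrow> 'a \<Rightarrow> 'a set \<Rightarrow> real" where
  "toggle_minus P le p I =
     (if p \<in> I \<and> (\<forall>q\<in>I. le p q \<longrightarrow> q = p) then 1 else 0)"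

definition toggle_symmetric :: "'a set \<Rightarrow> ('a \<Rightarrow> 'a \<Rightarrow> bool) \<Rightarrow> ('a set \<Rightarrow> real) \<Rightarrow> bool" where
  "toggle_symmetric P le \<mu> \<longleftrightarrow>
     (\<forall>p\<in>P. expect (order_ideals P le) \<mu> (toggle_plus P le p) =
             expect (order_ideals P le) \<mu> (toggle_minus P le p))"

definition ddeg :: "'a set set \<Rightarrow> 'a set \<Rightarrow> real" where
  "ddeg L I = real (card {K\<in>L. K \<subset> I \<and> \<not> (\<exists>M\<in>L. K \<subset> M \<and> M \<subset> I)})"

definition tCDE :: "'a set \<Rightarrow> ('a \<Rightarrow> 'a \<Rightarrow> bool) \<Rightarrow> bool" where
  "tCDE P le \<longleftrightarrow>
     (\<forall>\<mu>. is_distribution (order_ideals P le) \<mu> \<and> toggle_symmetric P le \<mu> \<longrightarrow>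
        expect (order_ideals P le) \<mu> (ddeg (order_ideals P le)) =
        expect (order_ideals P le) (uniform (order_ideals P le)) (ddeg (order_ideals P le)))"

end

theory Submission
  imports Defs
begin

(*
  On an order ideal I, ddeg I counts the maximal elements of I, i.e. it is the sum of the toggles
  T-_p(I). So if there are reals K and c_p with ddeg = K + SUM_p c_p (T+_p - T-_p) on J(P), then
  ddeg has expectation K under every toggle-symmetric distribution, in particular under the uniform
  one, and J(P) is tCDE. Such an expression is inherited from the components of P (add the
  constants) and transported along order isomorphisms, so it suffices to find one for each
  connected minuscule poset.

  Every connected minuscule poset is isomorphic to a region of Z^2 whose covers are unit steps:
  a rectangle, a staircase, a path turning one corner with an extra box in it, and two explicit
  regions for E6 and E7. In such a region every ideal is reached from the empty ideal by adding
  boxes one at a time, and adding a box changes the toggles only at the box and its four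
  neighbours. The expression is therefore constant as soon as the c_p satisfy one local linear
  condition per box; the coefficients are affine for rectangles, almost affine for the other two
  families, and for E6 and E7 the local conditions are checked by evaluation.
*)

section \<open>A sufficient condition for tCDE\<close>

text \<open>On order ideals, corrected_ddeg P le c I equals ddeg I - (SUM p:P. c p * (T+_p I - T-_p I)),
  see ddeg_eq_sum_toggle_minus.\<close>
definition corrected_ddeg :: "'a set \<Rightarrow> ('a \<Rightarrow> 'a \<Rightarrow> bool) \<Rightarrow> ('a \<Rightarrow> real) \<Rightarrow> 'a set \<Rightarrow> real" where
  "corrected_ddeg P le c I =
     (\<Sum>p\<in>P. (1 + c p) * toggle_minus P le p I - c p * toggle_plus P le p I)"

definition ddeg_toggle_affine :: "'a set \<Rightarrow> ('a \<Rightarrow> 'a \<Rightarrow> bool) \<Rightarrow> bool" where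
  "ddeg_toggle_affine P le \<longleftrightarrow> (\<exists>K c. \<forall>I\<in>order_ideals P le. corrected_ddeg P le c I = K)"

lemma finite_subset_has_maximal:
  assumes "is_poset P le" "A \<subseteq> P" "finite A" "A \<noteq> {}"
  shows "\<exists>p\<in>A. \<forall>q\<in>A. le p q \<longrightarrow> q = p"
  using assms(3,4,2)
proof (induction A rule: finite_ne_induct)
  case (singleton x)
  then show ?case by blast
next
  case (insert x A)
  then obtain p where p: "p \<in> A" "\<forall>q\<in>A. le p q \<longrightarrow> q = p" by blast
  show ?case
  proof (cases "le p x")
    case True
    have "q = x" if "q \<in> A" "le x q" for q
    proof -
      have "le p q"
        using assms(1) insert.prems p(1) that True unfolding is_poset_def by blast
      then have "q = p" using p that(1) by blast
      then show ?thesis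
        using assms(1) insert.prems p(1) that True unfolding is_poset_def by blast
    qed
    then show ?thesis by blast
  next
    case False
    then show ?thesis using p by blast
  qed
qed

lemma order_ideals_subset: "I \<in> order_ideals P le \<Longrightarrow> I \<subseteq> P"
  unfolding order_ideals_def by blast

lemma order_ideal_down_closed: "I \<in> order_ideals P le \<Longrightarrow> x \<in> I \<Longrightarrow> y \<in> P \<Longrightarrow> le y x \<Longrightarrow> y \<in> I"
  unfolding order_ideals_def by blast

lemma order_ideal_Diff_maximal:
  assumes "I \<in> order_ideals P le" "\<forall>q\<in>I. le p q \<longrightarrow> q = p"
  shows "I - {p} \<in> order_ideals P le"
  using assms unfolding order_ideals_def by blast

lemma finite_order_ideals: "finite P \<Longrightarrow> finite (order_ideals P le)"
  unfolding order_ideals_def by (rule finite_subset[of _ "Pow P"]) auto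

lemma empty_in_order_ideals: "{} \<in> order_ideals P le"
  unfolding order_ideals_def by auto

lemma order_ideal_Int: "I \<in> order_ideals P le \<Longrightarrow> C \<subseteq> P \<Longrightarrow> I \<inter> C \<in> order_ideals C le"
  unfolding order_ideals_def by auto

lemma lower_covers_order_ideal:
  assumes "is_poset P le" "finite P" "I \<in> order_ideals P le"
  defines "J \<equiv> order_ideals P le"
  shows "{K\<in>J. K \<subset> I \<and> \<not> (\<exists>M\<in>J. K \<subset> M \<and> M \<subset> I)} =
         (\<lambda>p. I - {p}) ` {p\<in>I. \<forall>q\<in>I. le p q \<longrightarrow> q = p}"
    (is "?covered = _ ` ?maximal")
proof
  show "(\<lambda>p. I - {p}) ` ?maximal \<subseteq> ?covered"
  proof
    fix K assume "K \<in> (\<lambda>p. I - {p}) ` ?maximal"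
    then obtain p where "p \<in> I" "\<forall>q\<in>I. le p q \<longrightarrow> q = p" "K = I - {p}" by blast
    then show "K \<in> ?covered"
      using order_ideal_Diff_maximal[OF assms(3)] unfolding J_def by auto
  qed
  show "?covered \<subseteq> (\<lambda>p. I - {p}) ` ?maximal"
  proof
    fix K assume "K \<in> ?covered"
    then have K: "K \<in> J" "K \<subset> I" and cover: "\<not> (\<exists>M\<in>J. K \<subset> M \<and> M \<subset> I)" by auto
    have IP: "I \<subseteq> P" using assms(3) by (rule order_ideals_subset)
    have "I - K \<subseteq> P" "I - K \<noteq> {}" using K(2) IP by auto
    moreover have "finite (I - K)" using calculation(1) assms(2) by (rule finite_subset)
    ultimately obtain p where p: "p \<in> I - K" "\<forall>q\<in>I - K. le p q \<longrightarrow> q = p"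
      using finite_subset_has_maximal[OF assms(1)] by blast
    have "q = p" if "q \<in> I" "le p q" for q
    proof -
      have "q \<notin> K"
        using p(1) that IP order_ideal_down_closed[of K P le q p] K(1) unfolding J_def by blast
      then show ?thesis using p that by blast
    qed
    then have p_max: "p \<in> ?maximal" using p by blast
    then have "I - {p} \<in> J" "I - {p} \<subset> I"
      using order_ideal_Diff_maximal[OF assms(3)] unfolding J_def by auto
    then have "\<not> K \<subset> I - {p}" using cover by blast
    moreover have "K \<subseteq> I - {p}" using K(2) p(1) by blast
    ultimately have "K = I - {p}" by (simp add: psubset_eq)
    then show "K \<in> (\<lambda>p. I - {p}) ` ?maximal" using p_max by blast
  qed
qed

lemma ddeg_eq_sum_toggle_minus:
  assumes "is_poset P le" "finite P" "I \<in> order_ideals P le"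
  shows "ddeg (order_ideals P le) I = (\<Sum>p\<in>P. toggle_minus P le p I)"
proof -
  let ?maximal = "{p\<in>I. \<forall>q\<in>I. le p q \<longrightarrow> q = p}"
  have "inj_on (\<lambda>p. I - {p}) ?maximal"
    unfolding inj_on_def by blast
  then have "ddeg (order_ideals P le) I = card ?maximal"
    unfolding ddeg_def lower_covers_order_ideal[OF assms] by (simp add: card_image)
  also have "?maximal = P \<inter> {p. p \<in> I \<and> (\<forall>q\<in>I. le p q \<longrightarrow> q = p)}"
    using order_ideals_subset[OF assms(3)] by blast
  finally show ?thesis
    unfolding toggle_minus_def using assms(2) by (simp add: sum.If_cases)
qed

text \<open>Adding and removing the element p are inverse bijections between the ideals
  where p can be toggled in and those where it can be toggled out.\<close>
lemma sum_toggle_plus_eq_sum_toggle_minus: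
  assumes "finite P" "p \<in> P"
  shows "(\<Sum>I\<in>order_ideals P le. toggle_plus P le p I) =
         (\<Sum>I\<in>order_ideals P le. toggle_minus P le p I)"
proof -
  let ?J = "order_ideals P le"
  define addable where "addable = {I\<in>?J. p \<in> P - I \<and> (\<forall>q\<in>P - I. le q p \<longrightarrow> q = p)}"
  define removable where "removable = {I\<in>?J. p \<in> I \<and> (\<forall>q\<in>I. le p q \<longrightarrow> q = p)}"
  have "bij_betw (insert p) addable removable"
  proof (rule bij_betw_byWitness[where f'="\<lambda>I. I - {p}"])
    show "insert p ` addable \<subseteq> removable"
    proof
      fix K assume "K \<in> insert p ` addable"
      then obtain I where I: "I \<in> ?J" "p \<notin> I" "\<forall>q\<in>P - I. le q p \<longrightarrow> q = p" "K = insert p I"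
        unfolding addable_def by blast
      have "K \<in> ?J" using I assms(2) unfolding order_ideals_def by blast
      moreover have "\<forall>q\<in>K. le p q \<longrightarrow> q = p"
        using I assms(2) unfolding order_ideals_def by blast
      ultimately show "K \<in> removable" unfolding removable_def I(4) by blast
    qed
    show "(\<lambda>I. I - {p}) ` removable \<subseteq> addable"
    proof
      fix K assume "K \<in> (\<lambda>I. I - {p}) ` removable"
      then obtain I where I: "I \<in> ?J" "p \<in> I" "\<forall>q\<in>I. le p q \<longrightarrow> q = p" "K = I - {p}"
        unfolding removable_def by blast
      have "K \<in> ?J" unfolding I(4) using order_ideal_Diff_maximal I(1,3) .
      moreover have "\<forall>q\<in>P - K. le q p \<longrightarrow> q = p"
        using I unfolding order_ideals_def by blast
      ultimately show "K \<in> addable" unfolding addable_def I(4) using assms(2) by blast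
    qed
  qed (auto simp: addable_def removable_def)
  then have "card addable = card removable" by (rule bij_betw_same_card)
  moreover have "addable = ?J \<inter> {I. p \<in> P - I \<and> (\<forall>q\<in>P - I. le q p \<longrightarrow> q = p)}"
    "removable = ?J \<inter> {I. p \<in> I \<and> (\<forall>q\<in>I. le p q \<longrightarrow> q = p)}"
    unfolding addable_def removable_def by blast+
  ultimately show ?thesis
    unfolding toggle_plus_def toggle_minus_def
    using finite_order_ideals[OF assms(1)] by (simp add: sum.If_cases)
qed

lemma toggle_symmetric_uniform:
  assumes "finite P"
  shows "toggle_symmetric P le (uniform (order_ideals P le))"
  unfolding toggle_symmetric_def expect_def uniform_def
  using sum_toggle_plus_eq_sum_toggle_minus[OF assms] by (simp add: sum_divide_distrib[symmetric])

lemma is_distribution_uniform: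
  assumes "finite P"
  shows "is_distribution (order_ideals P le) (uniform (order_ideals P le))"
proof -
  have "card (order_ideals P le) > 0"
    using finite_order_ideals[OF assms] empty_in_order_ideals card_gt_0_iff by blast
  then show ?thesis unfolding is_distribution_def uniform_def by simp
qed

lemma expect_ddeg_eq_const:
  assumes "is_poset P le" "finite P"
    and const: "\<forall>I\<in>order_ideals P le. corrected_ddeg P le c I = K"
    and dist: "is_distribution (order_ideals P le) \<mu>"
    and sym: "toggle_symmetric P le \<mu>"
  shows "expect (order_ideals P le) \<mu> (ddeg (order_ideals P le)) = K"
proof -
  let ?J = "order_ideals P le"
  let ?tp = "toggle_plus P le" and ?tm = "toggle_minus P le"
  have ddeg: "ddeg ?J I = K + (\<Sum>p\<in>P. c p * (?tp p I - ?tm p I))" if "I \<in> ?J" for I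
  proof -
    have "corrected_ddeg P le c I = (\<Sum>p\<in>P. ?tm p I) - (\<Sum>p\<in>P. c p * (?tp p I - ?tm p I))"
      unfolding corrected_ddeg_def sum_subtractf[symmetric] by (rule sum.cong) (auto simp: algebra_simps)
    then show ?thesis
      using const that ddeg_eq_sum_toggle_minus[OF assms(1,2) that] by simp
  qed
  have "expect ?J \<mu> (ddeg ?J) =
        (\<Sum>I\<in>?J. \<mu> I * K + (\<Sum>p\<in>P. c p * (\<mu> I * ?tp p I - \<mu> I * ?tm p I)))"
    unfolding expect_def by (rule sum.cong) (auto simp: ddeg sum_distrib_left algebra_simps)
  also have "\<dots> = (\<Sum>I\<in>?J. \<mu> I) * K +
      (\<Sum>p\<in>P. c p * ((\<Sum>I\<in>?J. \<mu> I * ?tp p I) - (\<Sum>I\<in>?J. \<mu> I * ?tm p I)))"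
    by (simp add: sum.distrib sum_distrib_left sum_distrib_right sum_subtractf sum.swap[of _ P]
        algebra_simps)
  also have "(\<Sum>I\<in>?J. \<mu> I) = 1" using dist unfolding is_distribution_def by simp
  also have "(\<Sum>p\<in>P. c p * ((\<Sum>I\<in>?J. \<mu> I * ?tp p I) - (\<Sum>I\<in>?J. \<mu> I * ?tm p I))) = 0"
    using sym unfolding toggle_symmetric_def expect_def by (intro sum.neutral) auto
  finally show ?thesis by simp
qed

lemma tCDE_if_ddeg_toggle_affine:
  assumes "is_poset P le" "finite P" "ddeg_toggle_affine P le"
  shows "tCDE P le"
proof -
  obtain K c where "\<forall>I\<in>order_ideals P le. corrected_ddeg P le c I = K"
    using assms(3) unfolding ddeg_toggle_affine_def by blast
  then show ?thesis
    unfolding tCDE_def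
    using expect_ddeg_eq_const[OF assms(1,2)] is_distribution_uniform[OF assms(2)]
      toggle_symmetric_uniform[OF assms(2)] by simp
qed

section \<open>Disjoint unions and order isomorphisms\<close>

lemma comp_rel_rtranclp_in: "(comp_rel P le)\<^sup>*\<^sup>* x y \<Longrightarrow> x \<in> P \<Longrightarrow> y \<in> P"
  by (induction rule: rtranclp_induct) (auto simp: comp_rel_def)

lemma component_subset: "x \<in> P \<Longrightarrow> component P le x \<subseteq> P"
  unfolding component_def using comp_rel_rtranclp_in by fastforce

lemma component_self: "x \<in> component P le x"
  unfolding component_def by simp

lemma component_eq:
  assumes "y \<in> component P le x"
  shows "component P le y = component P le x"
proof -
  have xy: "(comp_rel P le)\<^sup>*\<^sup>* x y" using assms unfolding component_def by simp
  have "symp (comp_rel P le)"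
    unfolding symp_def comp_rel_def by blast
  then have yx: "(comp_rel P le)\<^sup>*\<^sup>* y x"
    using xy by (metis symp_rtranclp sympD)
  have "(comp_rel P le)\<^sup>*\<^sup>* y z \<longleftrightarrow> (comp_rel P le)\<^sup>*\<^sup>* x z" for z
    using xy yx rtranclp_trans[of "comp_rel P le"] by metis
  then show ?thesis unfolding component_def by blast
qed

lemma component_comparable:
  assumes "p \<in> component P le x" "x \<in> P" "q \<in> P" "le q p \<or> le p q"
  shows "q \<in> component P le x"
proof -
  have "comp_rel P le p q"
    using assms component_subset[OF assms(2)] unfolding comp_rel_def by auto
  then show ?thesis
    using assms(1) unfolding component_def by (simp add: rtranclp.rtrancl_into_rtrancl)
qed

lemma components_disjoint:
  "A \<in> components P le \<Longrightarrow> B \<in> components P le \<Longrightarrow> A \<noteq> B \<Longrightarrow> A \<inter> B = {}"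
  unfolding components_def using component_eq[of _ P le] by blast

lemma Union_components: "\<Union>(components P le) = P"
  unfolding components_def using component_subset[of _ P le] component_self[of _ P le] by blast

text \<open>Toggling an element only looks at comparable elements, which lie in its own component.\<close>
lemma toggles_restrict_component:
  assumes "I \<in> order_ideals P le" "x \<in> P" "p \<in> component P le x"
  defines "C \<equiv> component P le x"
  shows "toggle_minus P le p I = toggle_minus C le p (I \<inter> C)"
    and "toggle_plus P le p I = toggle_plus C le p (I \<inter> C)"
proof -
  have CP: "C \<subseteq> P" unfolding C_def using assms(2) by (rule component_subset)
  have closed: "q \<in> C" if "q \<in> P" "le q p \<or> le p q" for q
    unfolding C_def using component_comparable[OF assms(3,2) that] .
  have "(p \<in> I \<and> (\<forall>q\<in>I. le p q \<longrightarrow> q = p)) \<longleftrightarrow>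
        (p \<in> I \<inter> C \<and> (\<forall>q\<in>I \<inter> C. le p q \<longrightarrow> q = p))"
    using assms(3) closed order_ideals_subset[OF assms(1)] unfolding C_def by blast
  then show "toggle_minus P le p I = toggle_minus C le p (I \<inter> C)"
    unfolding toggle_minus_def by simp
  have "(p \<in> P - I \<and> (\<forall>q\<in>P - I. le q p \<longrightarrow> q = p)) \<longleftrightarrow>
        (p \<in> C - I \<inter> C \<and> (\<forall>q\<in>C - I \<inter> C. le q p \<longrightarrow> q = p))"
    using assms(3) closed CP unfolding C_def by blast
  then show "toggle_plus P le p I = toggle_plus C le p (I \<inter> C)"
    unfolding toggle_plus_def by simp
qed

lemma ddeg_toggle_affine_components:
  assumes "finite P" and affine: "\<forall>C\<in>components P le. ddeg_toggle_affine C le"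
  shows "ddeg_toggle_affine P le"
proof -
  let ?Cs = "components P le"
  have "\<forall>C\<in>?Cs. \<exists>Kc. \<forall>I\<in>order_ideals C le. corrected_ddeg C le (snd Kc) I = fst Kc"
    using affine unfolding ddeg_toggle_affine_def by auto
  then obtain Kc where "\<forall>C\<in>?Cs. \<forall>I\<in>order_ideals C le. corrected_ddeg C le (snd (Kc C)) I = fst (Kc C)"
    by (rule bchoice[elim_format]) blast
  then obtain K c where Kc: "\<forall>C\<in>?Cs. \<forall>I\<in>order_ideals C le. corrected_ddeg C le (c C) I = K C"
    by (rule that[of "\<lambda>C. snd (Kc C)" "\<lambda>C. fst (Kc C)"])
  define c' where "c' p = c (component P le p) p" for p
  have "corrected_ddeg P le c' I = (\<Sum>C\<in>?Cs. K C)" if I: "I \<in> order_ideals P le" for I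
  proof -
    let ?g = "\<lambda>p. (1 + c' p) * toggle_minus P le p I - c' p * toggle_plus P le p I"
    have fin: "finite C" if "C \<in> ?Cs" for C
      using that assms(1) component_subset[of _ P le] unfolding components_def
      by (auto intro: finite_subset)
    have "\<forall>A\<in>?Cs. finite A" "\<forall>A\<in>?Cs. \<forall>B\<in>?Cs. A \<noteq> B \<longrightarrow> A \<inter> B = {}"
      using fin components_disjoint by blast+
    then have "sum ?g (\<Union>?Cs) = (\<Sum>C\<in>?Cs. sum ?g C)"
      using sum.Union_disjoint[of ?Cs ?g] by simp
    then have "corrected_ddeg P le c' I = (\<Sum>C\<in>?Cs. sum ?g C)"
      unfolding corrected_ddeg_def Union_components .
    also have "\<dots> = (\<Sum>C\<in>?Cs. K C)"
    proof (rule sum.cong[OF refl])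
      fix C assume C: "C \<in> ?Cs"
      then obtain x where x: "x \<in> P" "C = component P le x" unfolding components_def by auto
      have "c' p = c C p" if "p \<in> C" for p
        unfolding c'_def using component_eq[of p P le x] that x(2) by simp
      then have "sum ?g C = corrected_ddeg C le (c C) (I \<inter> C)"
        unfolding corrected_ddeg_def x(2) using toggles_restrict_component[OF I x(1)]
        by (intro sum.cong) (simp_all add: x(2))
      also have "\<dots> = K C"
        using Kc C order_ideal_Int[OF I component_subset[OF x(1)]] x(2) by simp
      finally show "sum ?g C = K C" .
    qed
    finally show ?thesis .
  qed
  then show ?thesis unfolding ddeg_toggle_affine_def by blast
qed

context
  fixes P :: "'a set" and le :: "'a \<Rightarrow> 'a \<Rightarrow> bool"
    and Q :: "'b set" and le' :: "'b \<Rightarrow> 'b \<Rightarrow> bool" and f :: "'a \<Rightarrow> 'b"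
  assumes iso: "order_iso P le Q le' f"
begin

lemma order_iso_inj_on: "inj_on f P"
  using iso unfolding order_iso_def bij_betw_def by blast

lemma order_iso_image: "f ` P = Q"
  using iso unfolding order_iso_def bij_betw_def by blast

lemma order_iso_le: "x \<in> P \<Longrightarrow> y \<in> P \<Longrightarrow> le x y \<longleftrightarrow> le' (f x) (f y)"
  using iso unfolding order_iso_def by blast

lemma order_ideal_image:
  assumes I: "I \<in> order_ideals P le"
  shows "f ` I \<in> order_ideals Q le'"
  unfolding order_ideals_def
proof (intro CollectI conjI ballI impI)
  have IP: "I \<subseteq> P" using I by (rule order_ideals_subset)
  then show "f ` I \<subseteq> Q" using order_iso_image by blast
  fix x' y' assume x': "x' \<in> f ` I" and y': "y' \<in> Q" and le: "le' y' x'"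
  obtain x where x: "x \<in> I" "x' = f x" using x' by blast
  obtain y where y: "y \<in> P" "y' = f y" using y' order_iso_image by blast
  have "le y x" using order_iso_le x y le IP by blast
  then have "y \<in> I" using order_ideal_down_closed[OF I x(1) y(1)] by blast
  then show "y' \<in> f ` I" using y by blast
qed

lemma order_iso_order_ideals:
  "order_iso (order_ideals P le) (\<subseteq>) (order_ideals Q le') (\<subseteq>) (image f)"
proof -
  have inj: "inj_on (image f) (order_ideals P le)"
  proof (rule inj_onI)
    fix I1 I2 assume "I1 \<in> order_ideals P le" "I2 \<in> order_ideals P le" "f ` I1 = f ` I2"
    then show "I1 = I2"
      using inj_on_image_eq_iff[OF order_iso_inj_on order_ideals_subset order_ideals_subset] by blast
  qed
  have "order_ideals Q le' \<subseteq> image f ` order_ideals P le"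
  proof
    fix I' assume I': "I' \<in> order_ideals Q le'"
    define I where "I = {x\<in>P. f x \<in> I'}"
    have "I \<in> order_ideals P le"
      using I' order_iso_le order_iso_image unfolding order_ideals_def I_def by auto
    moreover have "f ` I = I'"
      using order_ideals_subset[OF I'] order_iso_image unfolding I_def by auto
    ultimately show "I' \<in> image f ` order_ideals P le" by blast
  qed
  then have img: "image f ` order_ideals P le = order_ideals Q le'"
    using order_ideal_image by blast
  show ?thesis
    unfolding order_iso_def bij_betw_def
  proof (intro conjI inj img ballI)
    fix I I2 assume "I \<in> order_ideals P le" "I2 \<in> order_ideals P le"
    then have "I \<subseteq> P" "I2 \<subseteq> P" using order_ideals_subset by auto
    then show "I \<subseteq> I2 \<longleftrightarrow> f ` I \<subseteq> f ` I2" using order_iso_inj_on unfolding inj_on_def by blast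
  qed
qed

lemma toggle_minus_order_iso:
  assumes I: "I \<in> order_ideals P le" and p: "p \<in> P"
  shows "toggle_minus P le p I = toggle_minus Q le' (f p) (f ` I)"
proof -
  have IP: "I \<subseteq> P" using I by (rule order_ideals_subset)
  have "(\<forall>q\<in>I. le p q \<longrightarrow> q = p) \<longleftrightarrow> (\<forall>q'\<in>f ` I. le' (f p) q' \<longrightarrow> q' = f p)"
  proof
    assume max: "\<forall>q\<in>I. le p q \<longrightarrow> q = p"
    show "\<forall>q'\<in>f ` I. le' (f p) q' \<longrightarrow> q' = f p"
    proof (intro ballI impI)
      fix q' assume "q' \<in> f ` I" "le' (f p) q'"
      then obtain q where "q \<in> I" "q' = f q" "le' (f p) (f q)" by blast
      then show "q' = f p" using max order_iso_le[OF p] IP by blast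
    qed
  next
    assume max: "\<forall>q'\<in>f ` I. le' (f p) q' \<longrightarrow> q' = f p"
    show "\<forall>q\<in>I. le p q \<longrightarrow> q = p"
    proof (intro ballI impI)
      fix q assume q: "q \<in> I" "le p q"
      then have "f q = f p" using max order_iso_le[OF p] IP by blast
      then show "q = p" using order_iso_inj_on p q(1) IP unfolding inj_on_def by blast
    qed
  qed
  moreover have "p \<in> I \<longleftrightarrow> f p \<in> f ` I"
    using inj_on_image_mem_iff[OF order_iso_inj_on p IP] by simp
  ultimately show ?thesis unfolding toggle_minus_def by simp
qed

lemma toggle_plus_order_iso:
  assumes I: "I \<in> order_ideals P le" and p: "p \<in> P"
  shows "toggle_plus P le p I = toggle_plus Q le' (f p) (f ` I)"
proof -
  have IP: "I \<subseteq> P" using I by (rule order_ideals_subset)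
  have diff: "Q - f ` I = f ` (P - I)"
    using IP order_iso_image order_iso_inj_on by (simp add: inj_on_image_set_diff)
  have "(\<forall>q\<in>P - I. le q p \<longrightarrow> q = p) \<longleftrightarrow> (\<forall>q'\<in>f ` (P - I). le' q' (f p) \<longrightarrow> q' = f p)"
  proof
    assume min: "\<forall>q\<in>P - I. le q p \<longrightarrow> q = p"
    show "\<forall>q'\<in>f ` (P - I). le' q' (f p) \<longrightarrow> q' = f p"
    proof (intro ballI impI)
      fix q' assume "q' \<in> f ` (P - I)" "le' q' (f p)"
      then obtain q where "q \<in> P - I" "q' = f q" "le' (f q) (f p)" by blast
      then show "q' = f p" using min order_iso_le[OF _ p] by blast
    qed
  next
    assume min: "\<forall>q'\<in>f ` (P - I). le' q' (f p) \<longrightarrow> q' = f p"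
    show "\<forall>q\<in>P - I. le q p \<longrightarrow> q = p"
    proof (intro ballI impI)
      fix q assume q: "q \<in> P - I" "le q p"
      then have "f q = f p" using min order_iso_le[OF _ p] by blast
      then show "q = p" using order_iso_inj_on p q(1) unfolding inj_on_def by blast
    qed
  qed
  moreover have "p \<in> P - I \<longleftrightarrow> f p \<in> f ` (P - I)"
    using inj_on_image_mem_iff[OF order_iso_inj_on p, of "P - I"] by blast
  ultimately show ?thesis unfolding toggle_plus_def diff by simp
qed

lemma ddeg_toggle_affine_order_iso:
  assumes "ddeg_toggle_affine Q le'"
  shows "ddeg_toggle_affine P le"
proof -
  obtain K c where Kc: "\<forall>I\<in>order_ideals Q le'. corrected_ddeg Q le' c I = K"
    using assms unfolding ddeg_toggle_affine_def by blast
  have "corrected_ddeg P le (c \<circ> f) I = K" if I: "I \<in> order_ideals P le" for I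
  proof -
    have "corrected_ddeg P le (c \<circ> f) I = (\<Sum>p\<in>P. (1 + c (f p)) * toggle_minus Q le' (f p) (f ` I)
        - c (f p) * toggle_plus Q le' (f p) (f ` I))"
      unfolding corrected_ddeg_def
      by (simp add: toggle_minus_order_iso[OF I] toggle_plus_order_iso[OF I] cong: sum.cong)
    also have "\<dots> = corrected_ddeg Q le' c (f ` I)"
      unfolding corrected_ddeg_def
      using sum.reindex_bij_betw[OF iso[unfolded order_iso_def, THEN conjunct1]] .
    finally show ?thesis using Kc order_ideal_image[OF I] by simp
  qed
  then show ?thesis unfolding ddeg_toggle_affine_def by blast
qed

end

lemma ddeg_toggle_affine_isomorphic:
  "poset_isomorphic P le Q le' \<Longrightarrow> ddeg_toggle_affine Q le' \<Longrightarrow> ddeg_toggle_affine P le"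
  unfolding poset_isomorphic_def using ddeg_toggle_affine_order_iso by blast

section \<open>Regions of the integer grid\<close>

definition grid_le :: "int \<times> int \<Rightarrow> int \<times> int \<Rightarrow> bool" where
  "grid_le p q \<longleftrightarrow> fst p \<le> fst q \<and> snd p \<le> snd q"

lemma grid_le_Pair [simp]: "grid_le (a, b) (a', b') \<longleftrightarrow> a \<le> a' \<and> b \<le> b'"
  unfolding grid_le_def by simp

lemma is_poset_grid_le: "is_poset S grid_le"
  unfolding is_poset_def grid_le_def by auto

text \<open>The change of the corrected down-degree when the box (x,y) is added to an ideal J
  (corrected_ddeg_insert_box); u and v record whether the diagonal neighbours (x-1,y+1) and (x+1,y-1) lie in J.\<close>
definition box_increment ::
    "(int \<times> int) set \<Rightarrow> (int \<times> int \<Rightarrow> real) \<Rightarrow> int \<Rightarrow> int \<Rightarrow> bool \<Rightarrow> bool \<Rightarrow> real" where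
  "box_increment S c x y u v = 1 + 2 * c (x,y)
     - (if (x-1,y) \<in> S \<and> \<not> u then 1 + c (x-1,y) else 0)
     - (if (x,y-1) \<in> S \<and> \<not> v then 1 + c (x,y-1) else 0)
     - (if (x+1,y) \<in> S \<and> (v \<or> (x+1,y-1) \<notin> S) then c (x+1,y) else 0)
     - (if (x,y+1) \<in> S \<and> (u \<or> (x-1,y+1) \<notin> S) then c (x,y+1) else 0)"

text \<open>A region whose cover relations are exactly the unit steps lying in it.\<close>
locale unit_step_region =
  fixes S :: "(int \<times> int) set"
  assumes finite_region: "finite S"
    and step_from: "\<And>a b a' b'. (a,b) \<in> S \<Longrightarrow> (a',b') \<in> S \<Longrightarrow> grid_le (a,b) (a',b') \<Longrightarrow>
      (a,b) \<noteq> (a',b') \<Longrightarrow>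
      ((a+1,b) \<in> S \<and> grid_le (a+1,b) (a',b')) \<or> ((a,b+1) \<in> S \<and> grid_le (a,b+1) (a',b'))"
    and step_into: "\<And>a b a' b'. (a,b) \<in> S \<Longrightarrow> (a',b') \<in> S \<Longrightarrow> grid_le (a,b) (a',b') \<Longrightarrow>
      (a,b) \<noteq> (a',b') \<Longrightarrow>
      ((a'-1,b') \<in> S \<and> grid_le (a,b) (a'-1,b')) \<or> ((a',b'-1) \<in> S \<and> grid_le (a,b) (a',b'-1))"
begin

lemma toggle_minus_region:
  assumes J: "J \<in> order_ideals S grid_le"
  shows "toggle_minus S grid_le (a,b) J =
         (if (a,b) \<in> J \<and> (a+1,b) \<notin> J \<and> (a,b+1) \<notin> J then 1 else 0)"
proof -
  have "(\<forall>q\<in>J. grid_le (a,b) q \<longrightarrow> q = (a,b)) \<longleftrightarrow> (a+1,b) \<notin> J \<and> (a,b+1) \<notin> J"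
    if "(a,b) \<in> J"
  proof
    assume out: "(a+1,b) \<notin> J \<and> (a,b+1) \<notin> J"
    show "\<forall>q\<in>J. grid_le (a,b) q \<longrightarrow> q = (a,b)"
    proof (intro ballI impI, rule ccontr)
      fix q assume q: "q \<in> J" "grid_le (a,b) q" "q \<noteq> (a,b)"
      obtain a' b' where q_eq: "q = (a',b')" by fastforce
      have "(a,b) \<in> S" "(a',b') \<in> S" using that q q_eq order_ideals_subset[OF J] by auto
      then have "((a+1,b) \<in> S \<and> grid_le (a+1,b) q) \<or> ((a,b+1) \<in> S \<and> grid_le (a,b+1) q)"
        using step_from q q_eq by blast
      then show False using out order_ideal_down_closed[OF J q(1)] by blast
    qed
  qed auto
  then show ?thesis unfolding toggle_minus_def by auto
qed

lemma toggle_plus_region: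
  assumes J: "J \<in> order_ideals S grid_le"
  shows "toggle_plus S grid_le (a,b) J =
         (if (a,b) \<in> S - J \<and> (a-1,b) \<notin> S - J \<and> (a,b-1) \<notin> S - J then 1 else 0)"
proof -
  have "(\<forall>q\<in>S - J. grid_le q (a,b) \<longrightarrow> q = (a,b)) \<longleftrightarrow> (a-1,b) \<notin> S - J \<and> (a,b-1) \<notin> S - J"
    if "(a,b) \<in> S - J"
  proof
    assume out: "(a-1,b) \<notin> S - J \<and> (a,b-1) \<notin> S - J"
    show "\<forall>q\<in>S - J. grid_le q (a,b) \<longrightarrow> q = (a,b)"
    proof (intro ballI impI, rule ccontr)
      fix q assume q: "q \<in> S - J" "grid_le q (a,b)" "q \<noteq> (a,b)"
      obtain a' b' where q_eq: "q = (a',b')" by fastforce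
      have "((a-1,b) \<in> S \<and> grid_le q (a-1,b)) \<or> ((a,b-1) \<in> S \<and> grid_le q (a,b-1))"
        using step_into[of a' b' a b] that q q_eq by blast
      then show False using out order_ideal_down_closed[OF J] q(1) by blast
    qed
  next
    assume "\<forall>q\<in>S - J. grid_le q (a,b) \<longrightarrow> q = (a,b)"
    from this[rule_format, of "(a-1,b)"] this[rule_format, of "(a,b-1)"]
    show "(a-1,b) \<notin> S - J \<and> (a,b-1) \<notin> S - J" by auto
  qed
  then show ?thesis unfolding toggle_plus_def by auto
qed

lemma corrected_ddeg_insert_box:
  assumes J: "J \<in> order_ideals S grid_le" and J': "insert (x,y) J \<in> order_ideals S grid_le"
    and new: "(x,y) \<notin> J"
  shows "corrected_ddeg S grid_le c (insert (x,y) J) - corrected_ddeg S grid_le c J =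
         box_increment S c x y ((x-1,y+1) \<in> J) ((x+1,y-1) \<in> J)"
proof -
  let ?I = "insert (x,y) J"
  note toggles = toggle_minus_region[OF J] toggle_minus_region[OF J']
    toggle_plus_region[OF J] toggle_plus_region[OF J']
  have JS: "J \<subseteq> S" and xy: "(x,y) \<in> S"
    using order_ideals_subset[OF J] order_ideals_subset[OF J'] by auto
  have left: "(x-1,y) \<in> J" if "(x-1,y) \<in> S"
    using order_ideal_down_closed[OF J' _ that, of "(x,y)"] by auto
  have below: "(x,y-1) \<in> J" if "(x,y-1) \<in> S"
    using order_ideal_down_closed[OF J' _ that, of "(x,y)"] by auto
  have right: "(x+1,y) \<notin> J"
    using order_ideal_down_closed[OF J, of "(x+1,y)" "(x,y)"] xy new by auto
  have above: "(x,y+1) \<notin> J"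
    using order_ideal_down_closed[OF J, of "(x,y+1)" "(x,y)"] xy new by auto
  define d where "d p = ((1 + c p) * toggle_minus S grid_le p ?I - c p * toggle_plus S grid_le p ?I)
     - ((1 + c p) * toggle_minus S grid_le p J - c p * toggle_plus S grid_le p J)" for p
  define N where "N = {(x,y), (x-1,y), (x,y-1), (x+1,y), (x,y+1)}"
  have far: "d p = 0" if "p \<notin> N" for p
  proof -
    obtain a b where p: "p = (a,b)" by fastforce
    have "(a,b) \<noteq> (x,y)" "(a+1,b) \<noteq> (x,y)" "(a,b+1) \<noteq> (x,y)" "(a-1,b) \<noteq> (x,y)" "(a,b-1) \<noteq> (x,y)"
      using that unfolding p N_def by auto
    then have "toggle_minus S grid_le p ?I = toggle_minus S grid_le p J"
      "toggle_plus S grid_le p ?I = toggle_plus S grid_le p J"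
      unfolding p toggles by (simp_all only: insert_iff Diff_iff simp_thms)
    then show ?thesis unfolding d_def by simp
  qed
  have "corrected_ddeg S grid_le c ?I - corrected_ddeg S grid_le c J = sum d S"
    unfolding corrected_ddeg_def d_def by (simp add: sum_subtractf)
  also have "\<dots> = sum d (S \<inter> N)"
    using far finite_region by (intro sum.mono_neutral_right) auto
  also have "\<dots> = (\<Sum>p\<in>N. if p \<in> S then d p else 0)"
    using sum.inter_restrict[of N d S] by (simp add: N_def Int_commute)
  also have "\<dots> = d (x,y) + (if (x-1,y) \<in> S then d (x-1,y) else 0)
     + (if (x,y-1) \<in> S then d (x,y-1) else 0) + (if (x+1,y) \<in> S then d (x+1,y) else 0)
     + (if (x,y+1) \<in> S then d (x,y+1) else 0)"
    unfolding N_def using xy by (simp add: add.assoc)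
  also have "d (x,y) = 1 + 2 * c (x,y)"
    unfolding d_def using xy new left below right above by (simp add: toggles)
  also have "(if (x-1,y) \<in> S then d (x-1,y) else 0) =
      - (if (x-1,y) \<in> S \<and> (x-1,y+1) \<notin> J then 1 + c (x-1,y) else 0)"
    unfolding d_def using new left by (auto simp: toggles)
  also have "(if (x,y-1) \<in> S then d (x,y-1) else 0) =
      - (if (x,y-1) \<in> S \<and> (x+1,y-1) \<notin> J then 1 + c (x,y-1) else 0)"
    unfolding d_def using new below by (auto simp: toggles)
  also have "(if (x+1,y) \<in> S then d (x+1,y) else 0) =
      - (if (x+1,y) \<in> S \<and> ((x+1,y-1) \<in> J \<or> (x+1,y-1) \<notin> S) then c (x+1,y) else 0)"
    unfolding d_def using xy new right JS by (auto simp: toggles)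
  also have "(if (x,y+1) \<in> S then d (x,y+1) else 0) =
      - (if (x,y+1) \<in> S \<and> ((x-1,y+1) \<in> J \<or> (x-1,y+1) \<notin> S) then c (x,y+1) else 0)"
    unfolding d_def using xy new above JS by (auto simp: toggles)
  finally show ?thesis unfolding box_increment_def by simp
qed

lemma corrected_ddeg_empty:
  assumes m: "m \<in> S" "\<forall>p\<in>S. grid_le m p"
  shows "corrected_ddeg S grid_le c {} = - c m"
proof -
  have "toggle_plus S grid_le p {} = (if p = m then 1 else 0)" if "p \<in> S" for p
  proof (cases "p = m")
    case True
    have "r = m" if "r \<in> S" "grid_le r m" for r
      using m that is_poset_grid_le[of S] unfolding is_poset_def by blast
    then show ?thesis unfolding toggle_plus_def using True m(1) by auto
  next
    case False
    then show ?thesis unfolding toggle_plus_def using m \<open>p \<in> S\<close> by auto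
  qed
  then have "corrected_ddeg S grid_le c {} = (\<Sum>p\<in>S. if p = m then - c m else 0)"
    unfolding corrected_ddeg_def toggle_minus_def by (intro sum.cong) auto
  also have "\<dots> = - c m" using finite_region m(1) by simp
  finally show ?thesis .
qed

lemma corrected_ddeg_const:
  assumes m: "m \<in> S" "\<forall>p\<in>S. grid_le m p"
    and local: "\<And>x y u v. (x,y) \<in> S \<Longrightarrow> (u \<Longrightarrow> (x-1,y+1) \<in> S) \<Longrightarrow> (v \<Longrightarrow> (x+1,y-1) \<in> S) \<Longrightarrow>
      box_increment S c x y u v = 0"
    and I: "I \<in> order_ideals S grid_le"
  shows "corrected_ddeg S grid_le c I = - c m"
  using I
proof (induction "card I" arbitrary: I)
  case 0
  then have "I = {}"
    using order_ideals_subset finite_region by (metis card_0_eq finite_subset)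
  then show ?case using corrected_ddeg_empty[OF m] by simp
next
  case (Suc n)
  have IS: "I \<subseteq> S" using Suc.prems by (rule order_ideals_subset)
  have "finite I" using IS finite_region by (rule finite_subset)
  moreover have "I \<noteq> {}" using Suc.hyps(2) by auto
  ultimately obtain q where q: "q \<in> I" "\<forall>r\<in>I. grid_le q r \<longrightarrow> r = q"
    using finite_subset_has_maximal[OF is_poset_grid_le IS] by blast
  obtain x y where xy: "q = (x,y)" by fastforce
  let ?J = "I - {(x,y)}"
  have J: "?J \<in> order_ideals S grid_le"
    using order_ideal_Diff_maximal[OF Suc.prems] q xy by simp
  moreover have "card ?J = n" using Suc.hyps(2) q xy \<open>finite I\<close> by simp
  ultimately have "corrected_ddeg S grid_le c ?J = - c m" using Suc.hyps(1) by simp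
  moreover have "insert (x,y) ?J = I" using q xy by auto
  moreover have "box_increment S c x y ((x-1,y+1) \<in> ?J) ((x+1,y-1) \<in> ?J) = 0"
    by (rule local) (use IS q xy in auto)
  ultimately show ?case
    using corrected_ddeg_insert_box[of ?J x y c] J Suc.prems by simp
qed

lemma ddeg_toggle_affine_region:
  assumes "m \<in> S" "\<forall>p\<in>S. grid_le m p"
    and "\<And>x y u v. (x,y) \<in> S \<Longrightarrow> (u \<Longrightarrow> (x-1,y+1) \<in> S) \<Longrightarrow> (v \<Longrightarrow> (x+1,y-1) \<in> S) \<Longrightarrow>
      box_increment S c x y u v = 0"
  shows "ddeg_toggle_affine S grid_le"
  using corrected_ddeg_const[OF assms] unfolding ddeg_toggle_affine_def by blast

end

section \<open>Rectangles, staircases and the double-tailed diamond\<close>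

text \<open>The box increment written out for a box with coefficient c0 whose left, lower, right and upper
  neighbours have coefficients cl, cd, cr, cu and lie in the region iff L, D, R, U hold.\<close>
lemma affine_box_increment_eq_0:
  fixes \<alpha> \<beta> c0 cl cd cr cu :: real
  assumes "\<alpha> + \<beta> = 1" "cl = c0 - \<alpha>" "cd = c0 - \<beta>" "cr = c0 + \<alpha>" "cu = c0 + \<beta>"
    "\<not> R \<and> \<not> D \<longrightarrow> c0 = - \<alpha>" "\<not> L \<and> \<not> U \<longrightarrow> c0 = - \<beta>" "u \<longrightarrow> L \<and> U" "v \<longrightarrow> R \<and> D"
  shows "1 + 2 * c0 - (if L \<and> \<not> u then 1 + cl else 0) - (if D \<and> \<not> v then 1 + cd else 0)
     - (if R \<and> (v \<or> \<not> (R \<and> D)) then cr else 0) - (if U \<and> (u \<or> \<not> (L \<and> U)) then cu else 0) = 0"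
  using assms by (cases L; cases D; cases R; cases U; cases u; cases v) simp_all

definition rectangle_coeff :: "nat \<Rightarrow> nat \<Rightarrow> int \<times> int \<Rightarrow> real" where
  "rectangle_coeff a b p =
     (real b * of_int (fst p) + real a * of_int (snd p) - real a - real b - real a * real b)
     / (real a + real b)"

lemma box_increment_rectangle:
  assumes ab: "1 \<le> a" "1 \<le> b"
    and q: "(x,y) \<in> {1..int a} \<times> {1..int b}"
    and u: "u \<Longrightarrow> (x-1,y+1) \<in> {1..int a} \<times> {1..int b}"
    and v: "v \<Longrightarrow> (x+1,y-1) \<in> {1..int a} \<times> {1..int b}"
  shows "box_increment ({1..int a} \<times> {1..int b}) (rectangle_coeff a b) x y u v = 0"
proof -
  let ?S = "{1..int a} \<times> {1..int b}"
  let ?A = "real a" and ?B = "real b"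
  have pos: "?A + ?B > 0" using ab by simp
  define c0 where "c0 = rectangle_coeff a b (x,y)"
  have m1: "(x+1,y-1) \<in> ?S \<longleftrightarrow> (x+1,y) \<in> ?S \<and> (x,y-1) \<in> ?S" using q by auto
  have m2: "(x-1,y+1) \<in> ?S \<longleftrightarrow> (x-1,y) \<in> ?S \<and> (x,y+1) \<in> ?S" using q by auto
  have cl: "rectangle_coeff a b (x-1,y) = c0 - ?B / (?A + ?B)" unfolding c0_def rectangle_coeff_def
    by (simp add: diff_divide_distrib[symmetric] algebra_simps)
  have cd: "rectangle_coeff a b (x,y-1) = c0 - ?A / (?A + ?B)" unfolding c0_def rectangle_coeff_def
    by (simp add: diff_divide_distrib[symmetric] algebra_simps)
  have cr: "rectangle_coeff a b (x+1,y) = c0 + ?B / (?A + ?B)" unfolding c0_def rectangle_coeff_def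
    by (simp add: add_divide_distrib[symmetric] algebra_simps)
  have cu: "rectangle_coeff a b (x,y+1) = c0 + ?A / (?A + ?B)" unfolding c0_def rectangle_coeff_def
    by (simp add: add_divide_distrib[symmetric] algebra_simps)
  have s: "?B / (?A + ?B) + ?A / (?A + ?B) = 1" using pos by (simp add: add_divide_distrib[symmetric])
  have b1: "c0 = - (?B / (?A + ?B))" if "\<not> (x+1,y) \<in> ?S \<and> \<not> (x,y-1) \<in> ?S"
  proof -
    have "x = int a" "y = 1" using that q by auto
    then show ?thesis unfolding c0_def rectangle_coeff_def using pos by (simp add: field_simps)
  qed
  have b2: "c0 = - (?A / (?A + ?B))" if "\<not> (x-1,y) \<in> ?S \<and> \<not> (x,y+1) \<in> ?S"
  proof -
    have "x = 1" "y = int b" using that q by auto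
    then show ?thesis unfolding c0_def rectangle_coeff_def using pos by (simp add: field_simps)
  qed
  show ?thesis unfolding box_increment_def m1 m2 cl cd cr cu c0_def[symmetric]
    by (rule affine_box_increment_eq_0[OF s refl refl refl refl]) (use b1 b2 u v m1 m2 in auto)
qed

lemma unit_step_region_rectangle: "unit_step_region ({1..int a} \<times> {1..int b})"
  by unfold_locales auto

lemma ddeg_toggle_affine_rectangle:
  assumes "1 \<le> a" "1 \<le> b"
  shows "ddeg_toggle_affine ({1..int a} \<times> {1..int b}) grid_le"
proof (rule unit_step_region.ddeg_toggle_affine_region[OF unit_step_region_rectangle,
      where m="(1,1)" and c="rectangle_coeff a b"])
  fix x y u v
  assume "(x,y) \<in> {1..int a} \<times> {1..int b}" "u \<Longrightarrow> (x-1,y+1) \<in> {1..int a} \<times> {1..int b}"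
    "v \<Longrightarrow> (x+1,y-1) \<in> {1..int a} \<times> {1..int b}"
  then show "box_increment ({1..int a} \<times> {1..int b}) (rectangle_coeff a b) x y u v = 0"
    using box_increment_rectangle[OF assms] by blast
qed (use assms in auto)

lemma chain_prod_order_iso:
  "order_iso (chain_prod a b) prod_le ({1..int a} \<times> {1..int b}) grid_le (\<lambda>(i,j). (int i, int j))"
proof -
  have "(\<lambda>(i,j). (int i, int j)) ` chain_prod a b = {1..int a} \<times> {1..int b}"
  proof
    show "(\<lambda>(i,j). (int i, int j)) ` chain_prod a b \<subseteq> {1..int a} \<times> {1..int b}"
      unfolding chain_prod_def by auto
    show "{1..int a} \<times> {1..int b} \<subseteq> (\<lambda>(i,j). (int i, int j)) ` chain_prod a b"
    proof
      fix p assume p: "p \<in> {1..int a} \<times> {1..int b}"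
      obtain x y where xy: "p = (x,y)" by (cases p)
      have "(nat x, nat y) \<in> chain_prod a b" using p xy unfolding chain_prod_def by auto
      moreover have "p = (\<lambda>(i,j). (int i, int j)) (nat x, nat y)" using p xy by auto
      ultimately show "p \<in> (\<lambda>(i,j). (int i, int j)) ` chain_prod a b" by blast
    qed
  qed
  moreover have "inj_on (\<lambda>(i,j). (int i, int j)) (chain_prod a b)" unfolding inj_on_def by auto
  ultimately show ?thesis unfolding order_iso_def bij_betw_def prod_le_def by auto
qed

lemma ddeg_toggle_affine_chain_prod: "1 \<le> a \<Longrightarrow> 1 \<le> b \<Longrightarrow> ddeg_toggle_affine (chain_prod a b) prod_le"
  using ddeg_toggle_affine_order_iso[OF chain_prod_order_iso ddeg_toggle_affine_rectangle] by blast

text \<open>The interval [\<emptyset>, (b,b)] of Young's lattice, drawn through (part 0, part 1).\<close>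
definition triangle :: "nat \<Rightarrow> (int \<times> int) set" where
  "triangle b = {p. 0 \<le> snd p \<and> snd p \<le> fst p \<and> fst p \<le> int b}"

definition triangle_coeff :: "nat \<Rightarrow> int \<times> int \<Rightarrow> real" where
  "triangle_coeff b p = (if fst p = snd p then (2 * of_int (fst p) - real b - 2) / 4
             else (of_int (fst p) + of_int (snd p) - real b - 1) / 2)"

lemma box_increment_triangle:
  assumes q: "(x,y) \<in> triangle b"
    and u: "u \<Longrightarrow> (x-1,y+1) \<in> triangle b"
    and v: "v \<Longrightarrow> (x+1,y-1) \<in> triangle b"
  shows "box_increment (triangle b) (triangle_coeff b) x y u v = 0"
proof -
  have q': "0 \<le> y" "y \<le> x" "x \<le> int b" using q unfolding triangle_def by auto
  have u': "u \<Longrightarrow> y + 1 \<le> x - 1" using u unfolding triangle_def by auto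
  have v': "v \<Longrightarrow> 1 \<le> y \<and> x + 1 \<le> int b" using v unfolding triangle_def by auto
  show ?thesis
    using q' u' v' unfolding box_increment_def triangle_coeff_def triangle_def
    by (auto split: if_split; simp add: field_simps; linarith)
qed

lemma unit_step_region_triangle: "unit_step_region (triangle b)"
proof
  show "finite (triangle b)"
    by (rule finite_subset[of _ "{0..int b} \<times> {0..int b}"]) (auto simp: triangle_def)
qed (auto simp: triangle_def)

lemma ddeg_toggle_affine_triangle: "ddeg_toggle_affine (triangle b) grid_le"
proof (rule unit_step_region.ddeg_toggle_affine_region[OF unit_step_region_triangle,
      where m="(0,0)" and c="triangle_coeff b"])
  fix x y u v
  assume "(x,y) \<in> triangle b" "u \<Longrightarrow> (x-1,y+1) \<in> triangle b" "v \<Longrightarrow> (x+1,y-1) \<in> triangle b"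
  then show "box_increment (triangle b) (triangle_coeff b) x y u v = 0"
    by (rule box_increment_triangle)
qed (auto simp: triangle_def)

lemma part_simps[simp]:
  "part [] i = 0"
  "part [k] i = (if i = 0 then k else 0)"
  "part [k,l] i = (if i = 0 then k else if i = 1 then l else 0)"
  unfolding part_def by (cases i; auto simp: nth_Cons split: nat.splits)+

lemma young_interval_iff:
  "\<nu> \<in> young_interval b \<longleftrightarrow>
     \<nu> = [] \<or> (\<exists>k. \<nu> = [k] \<and> 1 \<le> k \<and> k \<le> b) \<or> (\<exists>k l. \<nu> = [k,l] \<and> 1 \<le> l \<and> l \<le> k \<and> k \<le> b)"
  (is "_ \<longleftrightarrow> ?shape")
proof
  assume h: "\<nu> \<in> young_interval b"
  then have ip: "is_partition \<nu>" and yl: "\<forall>i. part \<nu> i \<le> part [b,b] i"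
    unfolding young_interval_def young_le_def by auto
  show ?shape
  proof (cases \<nu>)
    case Nil then show ?thesis by simp
  next
    case (Cons k r)
    note kr = Cons
    show ?thesis
    proof (cases r)
      case Nil
      have "1 \<le> k" using ip kr Nil unfolding is_partition_def by (cases k) auto
      moreover have "k \<le> b" using yl[rule_format, of 0] kr Nil by simp
      ultimately show ?thesis using kr Nil by simp
    next
      case (Cons l r2)
      show ?thesis
      proof (cases r2)
        case Nil
        have "1 \<le> l" using ip kr Cons Nil unfolding is_partition_def by (cases l) auto
        moreover have "l \<le> k" using ip kr Cons Nil unfolding is_partition_def by simp
        moreover have "k \<le> b" using yl[rule_format, of 0] kr Cons Nil by simp
        ultimately show ?thesis using kr Cons Nil by simp
      next
        case (Cons m r3)
        have "0 < m" using ip kr \<open>r = l # r2\<close> Cons unfolding is_partition_def by (cases m) auto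
        moreover have "part \<nu> 2 = m" using kr \<open>r = l # r2\<close> Cons unfolding part_def by simp
        moreover have "part [b,b] 2 = 0" by simp
        ultimately show ?thesis using yl[rule_format, of 2] by simp
      qed
    qed
  qed
next
  assume ?shape
  then show "\<nu> \<in> young_interval b"
    unfolding young_interval_def young_le_def is_partition_def by auto
qed

definition young_corner :: "nat list \<Rightarrow> int \<times> int" where
  "young_corner \<nu> = (int (part \<nu> 0), int (part \<nu> 1))"

lemma young_corner_image: "young_corner ` young_interval b = triangle b"
proof
  show "young_corner ` young_interval b \<subseteq> triangle b"
    unfolding triangle_def young_corner_def using young_interval_iff by fastforce
  show "triangle b \<subseteq> young_corner ` young_interval b"
  proof
    fix p assume p: "p \<in> triangle b"
    obtain x y where xy: "p = (x,y)" by (cases p)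
    have c: "0 \<le> y" "y \<le> x" "x \<le> int b" using p xy unfolding triangle_def by auto
    show "p \<in> young_corner ` young_interval b"
    proof (cases "x = 0")
      case True
      then have "p = young_corner []" using xy c by (simp add: young_corner_def)
      moreover have "[] \<in> young_interval b" using young_interval_iff by simp
      ultimately show ?thesis by blast
    next
      case x0: False
      show ?thesis
      proof (cases "y = 0")
        case True
        then have "p = young_corner [nat x]" using xy c x0 by (simp add: young_corner_def)
        moreover have "1 \<le> nat x" "nat x \<le> b" using c x0 by auto
        then have "[nat x] \<in> young_interval b" using young_interval_iff by simp
        ultimately show ?thesis by blast
      next
        case False
        then have "p = young_corner [nat x, nat y]" using xy c x0 by (simp add: young_corner_def)
        moreover have "[nat x, nat y] \<in> young_interval b" using young_interval_iff c x0 False by auto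
        ultimately show ?thesis by blast
      qed
    qed
  qed
qed

lemma young_interval_order_iso:
  "order_iso (young_interval b) young_le (triangle b) grid_le young_corner"
proof -
  have inj: "inj_on young_corner (young_interval b)"
    unfolding inj_on_def young_corner_def by (auto simp: young_interval_iff)
  have le2: "part \<nu> i = 0" if "\<nu> \<in> young_interval b" "2 \<le> i" for \<nu> i
    using that young_interval_iff by auto
  have ord: "young_le \<nu> \<kappa> \<longleftrightarrow> grid_le (young_corner \<nu>) (young_corner \<kappa>)"
    if "\<nu> \<in> young_interval b" "\<kappa> \<in> young_interval b" for \<nu> \<kappa>
  proof
    assume "young_le \<nu> \<kappa>"
    then show "grid_le (young_corner \<nu>) (young_corner \<kappa>)" unfolding young_le_def young_corner_def by simp
  next
    assume h: "grid_le (young_corner \<nu>) (young_corner \<kappa>)"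
    show "young_le \<nu> \<kappa>" unfolding young_le_def
    proof
      fix i show "part \<nu> i \<le> part \<kappa> i"
      proof (cases "i < 2")
        case True
        then have "i = 0 \<or> i = 1" by auto
        then show ?thesis using h unfolding young_corner_def by auto
      next
        case False then show ?thesis using le2[OF that(1)] by simp
      qed
    qed
  qed
  show ?thesis unfolding order_iso_def bij_betw_def using young_corner_image inj ord by blast
qed

lemma ddeg_toggle_affine_young_interval: "ddeg_toggle_affine (young_interval b) young_le"
  using ddeg_toggle_affine_order_iso[OF young_interval_order_iso ddeg_toggle_affine_triangle] .

definition paa_grid :: "nat \<Rightarrow> (int \<times> int) set" where
  "paa_grid a = {p. (1 \<le> fst p \<and> fst p \<le> int a + 1 \<and> snd p = 0) \<or> (fst p = int a \<and> snd p = 1)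
                 \<or> (fst p = int a + 1 \<and> 1 \<le> snd p \<and> snd p \<le> int a)}"

definition paa_coeff :: "nat \<Rightarrow> int \<times> int \<Rightarrow> real" where
  "paa_coeff a p = (if snd p = 0 \<and> fst p \<le> int a then -1
             else if (fst p = int a + 1 \<and> snd p = 0) \<or> (fst p = int a \<and> snd p = 1) then -1/2 else 0)"

lemma box_increment_paa_grid:
  assumes a: "1 \<le> a" and q: "(x,y) \<in> paa_grid a"
    and u: "u \<Longrightarrow> (x-1,y+1) \<in> paa_grid a"
    and v: "v \<Longrightarrow> (x+1,y-1) \<in> paa_grid a"
  shows "box_increment (paa_grid a) (paa_coeff a) x y u v = 0"
proof -
  have "(y = 0 \<and> 1 \<le> x \<and> x \<le> int a) \<or> (x = int a + 1 \<and> y = 0) \<or> (x = int a \<and> y = 1)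
      \<or> (x = int a + 1 \<and> 1 \<le> y \<and> y \<le> int a)"
    using q unfolding paa_grid_def by auto
  then show ?thesis
  proof (elim disjE)
    assume h: "y = 0 \<and> 1 \<le> x \<and> x \<le> int a"
    have nu: "\<not> u" using u h unfolding paa_grid_def by auto
    have nv: "\<not> v" using v h unfolding paa_grid_def by auto
    show ?thesis
    proof (cases "x = int a")
      case True
      then show ?thesis using h nu nv a unfolding box_increment_def paa_coeff_def paa_grid_def by simp
    next
      case False
      then show ?thesis using h nu nv a unfolding box_increment_def paa_coeff_def paa_grid_def by simp
    qed
  next
    assume h: "x = int a+1 \<and> y = 0"
    have nv: "\<not> v" using v h unfolding paa_grid_def by auto
    show ?thesis using h nv a unfolding box_increment_def paa_coeff_def paa_grid_def by simp
  next
    assume h: "x = int a \<and> y = 1"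
    have nu: "\<not> u" using u h unfolding paa_grid_def by auto
    show ?thesis using h nu a unfolding box_increment_def paa_coeff_def paa_grid_def by simp
  next
    assume h: "x = int a + 1 \<and> 1 \<le> y \<and> y \<le> int a"
    have nu: "\<not> u" using u h unfolding paa_grid_def by auto
    have nv: "\<not> v" using v h unfolding paa_grid_def by auto
    show ?thesis
    proof (cases "y = 1")
      case True
      then show ?thesis using h nu nv a unfolding box_increment_def paa_coeff_def paa_grid_def by simp
    next
      case False
      then show ?thesis using h nu nv a unfolding box_increment_def paa_coeff_def paa_grid_def by simp
    qed
  qed
qed

lemma paa_grid_iff:
  "(x,y) \<in> paa_grid a \<longleftrightarrow>
     (y = 0 \<and> 1 \<le> x \<and> x \<le> int a + 1) \<or> (x = int a \<and> y = 1) \<or> (x = int a + 1 \<and> 1 \<le> y \<and> y \<le> int a)"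
  unfolding paa_grid_def by auto

lemma paa_grid_step_into:
  assumes a: "1 \<le> a"
    and h: "(x,y) \<in> paa_grid a" "(x',y') \<in> paa_grid a" "grid_le (x,y) (x',y')" "(x,y) \<noteq> (x',y')"
  shows "((x'-1,y') \<in> paa_grid a \<and> grid_le (x,y) (x'-1,y')) \<or>
         ((x',y'-1) \<in> paa_grid a \<and> grid_le (x,y) (x',y'-1))"
proof -
  have "(y' = 0 \<and> 1 \<le> x' \<and> x' \<le> int a + 1) \<or> (x' = int a \<and> y' = 1)
      \<or> (x' = int a + 1 \<and> 1 \<le> y' \<and> y' \<le> int a)"
    using h(2) unfolding paa_grid_iff .
  then show ?thesis
  proof (elim disjE)
  assume "y' = 0 \<and> 1 \<le> x' \<and> x' \<le> int a + 1"
  then show ?thesis using h a unfolding paa_grid_iff by auto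
next
  assume "x' = int a \<and> y' = 1"
  then show ?thesis using h a unfolding paa_grid_iff by auto
next
  assume "x' = int a + 1 \<and> 1 \<le> y' \<and> y' \<le> int a"
  then show ?thesis using h a unfolding paa_grid_iff by auto
qed
qed

lemma paa_grid_step_from:
  assumes a: "1 \<le> a"
    and h: "(x,y) \<in> paa_grid a" "(x',y') \<in> paa_grid a" "grid_le (x,y) (x',y')" "(x,y) \<noteq> (x',y')"
  shows "((x+1,y) \<in> paa_grid a \<and> grid_le (x+1,y) (x',y')) \<or>
         ((x,y+1) \<in> paa_grid a \<and> grid_le (x,y+1) (x',y'))"
proof -
  have "(y = 0 \<and> 1 \<le> x \<and> x \<le> int a + 1) \<or> (x = int a \<and> y = 1)
      \<or> (x = int a + 1 \<and> 1 \<le> y \<and> y \<le> int a)"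
    using h(1) unfolding paa_grid_iff .
  then show ?thesis
  proof (elim disjE)
  assume "y = 0 \<and> 1 \<le> x \<and> x \<le> int a + 1"
  then show ?thesis using h a unfolding paa_grid_iff by auto
next
  assume "x = int a \<and> y = 1"
  then show ?thesis using h a unfolding paa_grid_iff by auto
next
  assume "x = int a + 1 \<and> 1 \<le> y \<and> y \<le> int a"
  then show ?thesis using h a unfolding paa_grid_iff by auto
qed
qed

lemma unit_step_region_paa_grid:
  assumes "1 \<le> a"
  shows "unit_step_region (paa_grid a)"
proof
  show "finite (paa_grid a)"
    by (rule finite_subset[of _ "{0..int a+1} \<times> {0..int a}"]) (use assms in \<open>auto simp: paa_grid_def\<close>)
qed (use paa_grid_step_from[OF assms] paa_grid_step_into[OF assms] in blast)+

lemma ddeg_toggle_affine_paa_grid: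
  assumes "1 \<le> a"
  shows "ddeg_toggle_affine (paa_grid a) grid_le"
proof (rule unit_step_region.ddeg_toggle_affine_region[OF unit_step_region_paa_grid[OF assms],
      where m="(1,0)" and c="paa_coeff a"])
  fix x y u v
  assume "(x,y) \<in> paa_grid a" "u \<Longrightarrow> (x-1,y+1) \<in> paa_grid a" "v \<Longrightarrow> (x+1,y-1) \<in> paa_grid a"
  then show "box_increment (paa_grid a) (paa_coeff a) x y u v = 0"
    by (rule box_increment_paa_grid[OF assms])
qed (use assms in \<open>auto simp: paa_grid_def\<close>)

definition paa_embed :: "nat \<Rightarrow> paa_elem \<Rightarrow> int \<times> int" where
  "paa_embed a u =
     (case u of W i \<Rightarrow> (int i, 0) | X \<Rightarrow> (int a + 1, 0) | Y \<Rightarrow> (int a, 1) | Z k \<Rightarrow> (int a + 1, int k))"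

lemma paa_cover_embed_mono: "paa_cover a u v \<Longrightarrow> grid_le (paa_embed a u) (paa_embed a v)"
  unfolding paa_cover_def paa_embed_def by auto

lemma paa_le_embed_mono: "paa_le a u v \<Longrightarrow> grid_le (paa_embed a u) (paa_embed a v)"
  unfolding paa_le_def
proof (induction rule: rtranclp_induct)
  case base then show ?case unfolding grid_le_def by simp
next
  case (step y z)
  then show ?case using paa_cover_embed_mono[of a y z] unfolding grid_le_def by auto
qed

lemma paa_le_refl: "paa_le a u u"
  unfolding paa_le_def by simp

lemma paa_le_trans: "paa_le a u v \<Longrightarrow> paa_le a v w \<Longrightarrow> paa_le a u w"
  unfolding paa_le_def by (rule rtranclp_trans)

lemma paa_le_cover: "paa_cover a u v \<Longrightarrow> paa_le a u v"
  unfolding paa_le_def by (rule r_into_rtranclp)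

lemma paa_le_W_W:
  assumes "1 \<le> i" "i \<le> j" "j \<le> a"
  shows "paa_le a (W i) (W j)"
  using assms(2,3)
proof (induction j rule: dec_induct)
  case base
  show ?case by (rule paa_le_refl)
next
  case (step n)
  then have "paa_cover a (W n) (W (Suc n))" using assms(1) unfolding paa_cover_def by auto
  with step show ?case using paa_le_trans paa_le_cover by simp
qed

lemma paa_le_Z_Z:
  assumes "1 \<le> i" "i \<le> j" "j \<le> a"
  shows "paa_le a (Z i) (Z j)"
  using assms(2,3)
proof (induction j rule: dec_induct)
  case base
  show ?case by (rule paa_le_refl)
next
  case (step n)
  then have "paa_cover a (Z n) (Z (Suc n))" using assms(1) unfolding paa_cover_def by auto
  with step show ?case using paa_le_trans paa_le_cover by simp
qed

lemma paa_le_W_X: "1 \<le> i \<Longrightarrow> i \<le> a \<Longrightarrow> paa_le a (W i) X"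
  using paa_le_trans[OF paa_le_W_W[of i a a] paa_le_cover[of a "W a" X]] by (auto simp: paa_cover_def)

lemma paa_le_W_Y: "1 \<le> i \<Longrightarrow> i \<le> a \<Longrightarrow> paa_le a (W i) Y"
  using paa_le_trans[OF paa_le_W_W[of i a a] paa_le_cover[of a "W a" Y]] by (auto simp: paa_cover_def)

lemma paa_le_X_Z: "1 \<le> k \<Longrightarrow> k \<le> a \<Longrightarrow> paa_le a X (Z k)"
  using paa_le_trans[OF paa_le_cover[of a X "Z 1"] paa_le_Z_Z[of 1 k a]] by (auto simp: paa_cover_def)

lemma paa_le_Y_Z: "1 \<le> k \<Longrightarrow> k \<le> a \<Longrightarrow> paa_le a Y (Z k)"
  using paa_le_trans[OF paa_le_cover[of a Y "Z 1"] paa_le_Z_Z[of 1 k a]] by (auto simp: paa_cover_def)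

lemma paa_le_W_Z: "1 \<le> i \<Longrightarrow> i \<le> a \<Longrightarrow> 1 \<le> k \<Longrightarrow> k \<le> a \<Longrightarrow> paa_le a (W i) (Z k)"
  using paa_le_trans[OF paa_le_W_X paa_le_X_Z] by blast

lemma paa_carrier_iff:
  "u \<in> paa_carrier a \<longleftrightarrow>
     (\<exists>i. u = W i \<and> 1 \<le> i \<and> i \<le> a) \<or> u = X \<or> u = Y \<or> (\<exists>i. u = Z i \<and> 1 \<le> i \<and> i \<le> a)"
  unfolding paa_carrier_def by auto

lemma paa_le_if_embed_le:
  assumes u: "u \<in> paa_carrier a" and v: "v \<in> paa_carrier a"
    and le: "grid_le (paa_embed a u) (paa_embed a v)"
  shows "paa_le a u v"
proof (cases u)
  case (W i)
  with u v le show ?thesis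
    by (cases v) (auto simp: paa_embed_def paa_carrier_iff
        intro: paa_le_W_W paa_le_W_X paa_le_W_Y paa_le_W_Z)
next
  case X
  with v le show ?thesis
    by (cases v) (auto simp: paa_embed_def paa_carrier_iff paa_le_refl intro: paa_le_X_Z)
next
  case Y
  with v le show ?thesis
    by (cases v) (auto simp: paa_embed_def paa_carrier_iff paa_le_refl intro: paa_le_Y_Z)
next
  case (Z i)
  with u v le show ?thesis
    by (cases v) (auto simp: paa_embed_def paa_carrier_iff intro: paa_le_Z_Z)
qed

lemma paa_embed_image: "paa_embed a ` paa_carrier a = paa_grid a"
proof
  show "paa_embed a ` paa_carrier a \<subseteq> paa_grid a"
    unfolding paa_grid_def paa_embed_def paa_carrier_def by auto
  show "paa_grid a \<subseteq> paa_embed a ` paa_carrier a"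
  proof
    fix p assume p: "p \<in> paa_grid a"
    obtain x y where xy: "p = (x,y)" by (cases p)
    have "(y = 0 \<and> 1 \<le> x \<and> x \<le> int a + 1) \<or> (x = int a \<and> y = 1)
        \<or> (x = int a + 1 \<and> 1 \<le> y \<and> y \<le> int a)"
      using p xy paa_grid_iff by simp
    then show "p \<in> paa_embed a ` paa_carrier a"
    proof (elim disjE)
      assume h: "y = 0 \<and> 1 \<le> x \<and> x \<le> int a + 1"
      show ?thesis
      proof (cases "x = int a + 1")
        case True
        then have "p = paa_embed a X" using h xy by (simp add: paa_embed_def)
        moreover have "X \<in> paa_carrier a" by (simp add: paa_carrier_iff)
        ultimately show ?thesis by blast
      next
        case False
        then have "p = paa_embed a (W (nat x))" using h xy by (simp add: paa_embed_def)
        moreover have "W (nat x) \<in> paa_carrier a" using h False by (simp add: paa_carrier_iff) linarith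
        ultimately show ?thesis by blast
      qed
    next
      assume h: "x = int a \<and> y = 1"
      then have "p = paa_embed a Y" using xy by (simp add: paa_embed_def)
      moreover have "Y \<in> paa_carrier a" by (simp add: paa_carrier_iff)
      ultimately show ?thesis by blast
    next
      assume h: "x = int a + 1 \<and> 1 \<le> y \<and> y \<le> int a"
      then have "p = paa_embed a (Z (nat y))" using xy by (simp add: paa_embed_def)
      moreover have "Z (nat y) \<in> paa_carrier a" using h by (simp add: paa_carrier_iff) linarith
      ultimately show ?thesis by blast
    qed
  qed
qed

lemma paa_order_iso: "order_iso (paa_carrier a) (paa_le a) (paa_grid a) grid_le (paa_embed a)"
proof -
  have "inj_on (paa_embed a) (paa_carrier a)"
  proof (rule inj_onI)
    fix u v assume "u \<in> paa_carrier a" "v \<in> paa_carrier a" "paa_embed a u = paa_embed a v"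
    then show "u = v" unfolding paa_carrier_iff paa_embed_def by auto
  qed
  then show ?thesis
    unfolding order_iso_def bij_betw_def
    using paa_embed_image paa_le_embed_mono paa_le_if_embed_le by blast
qed

lemma ddeg_toggle_affine_paa: "1 \<le> a \<Longrightarrow> ddeg_toggle_affine (paa_carrier a) (paa_le a)"
  using ddeg_toggle_affine_order_iso[OF paa_order_iso ddeg_toggle_affine_paa_grid] .

section \<open>The exceptional posets\<close>

fun order_ideals_list :: "('a \<Rightarrow> 'a \<Rightarrow> bool) \<Rightarrow> 'a list \<Rightarrow> 'a set list" where
  "order_ideals_list le [] = [{}]"
| "order_ideals_list le (x # xs) =
     (let L = order_ideals_list le xs in L @ [insert x I. I \<leftarrow> L, \<forall>y\<in>set xs. le y x \<longrightarrow> y \<in> I])"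

fun maximal_first :: "('a \<Rightarrow> 'a \<Rightarrow> bool) \<Rightarrow> 'a list \<Rightarrow> bool" where
  "maximal_first le [] = True"
| "maximal_first le (x # xs) = (x \<notin> set xs \<and> (\<forall>z\<in>set xs. \<not> le x z) \<and> maximal_first le xs)"

lemma order_ideals_insert_maximal:
  assumes "x \<notin> A" "\<forall>z\<in>A. \<not> le x z"
  shows "order_ideals (insert x A) le =
         order_ideals A le \<union> {insert x I | I. I \<in> order_ideals A le \<and> (\<forall>y\<in>A. le y x \<longrightarrow> y \<in> I)}"
    (is "_ = _ \<union> ?with_x")
proof
  show "order_ideals (insert x A) le \<subseteq> order_ideals A le \<union> ?with_x"
  proof
    fix J assume J: "J \<in> order_ideals (insert x A) le"
    show "J \<in> order_ideals A le \<union> ?with_x"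
    proof (cases "x \<in> J")
      case False
      then have "J \<in> order_ideals A le" using J unfolding order_ideals_def by auto
      then show ?thesis by blast
    next
      case True
      have "J - {x} \<in> order_ideals A le" using J assms(1) unfolding order_ideals_def by auto
      moreover have "\<forall>y\<in>A. le y x \<longrightarrow> y \<in> J - {x}"
        using J True assms(1) unfolding order_ideals_def by auto
      moreover have "J = insert x (J - {x})" using True by auto
      ultimately show ?thesis by blast
    qed
  qed
  show "order_ideals A le \<union> ?with_x \<subseteq> order_ideals (insert x A) le"
    using assms(2) unfolding order_ideals_def by auto
qed

lemma order_ideals_list_correct:
  "maximal_first le xs \<Longrightarrow> order_ideals (set xs) le = set (order_ideals_list le xs)"
proof (induction xs)
  case Nil
  show ?case unfolding order_ideals_def by auto
next
  case (Cons x xs)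
  then show ?case
    by (auto simp: order_ideals_insert_maximal Let_def)
qed

definition order_iso_check :: "('a \<Rightarrow> 'a \<Rightarrow> bool) \<Rightarrow> ('b \<Rightarrow> 'b \<Rightarrow> bool) \<Rightarrow> 'a list \<Rightarrow> 'b list \<Rightarrow> bool" where
  "order_iso_check le le' xs ys \<longleftrightarrow> distinct xs \<and> distinct ys \<and> length xs = length ys \<and>
     list_all (\<lambda>i. list_all (\<lambda>j. le (xs ! i) (xs ! j) = le' (ys ! i) (ys ! j))
       [0..<length xs]) [0..<length xs]"

definition nth_map :: "'a list \<Rightarrow> 'b list \<Rightarrow> 'a \<Rightarrow> 'b" where
  "nth_map xs ys x = ys ! (THE i. i < length xs \<and> xs ! i = x)"

lemma nth_map_nth:
  assumes "distinct xs" "i < length xs"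
  shows "nth_map xs ys (xs ! i) = ys ! i"
proof -
  have "(THE k. k < length xs \<and> xs ! k = xs ! i) = i"
    by (rule the_equality) (use assms nth_eq_iff_index_eq in auto)
  then show ?thesis unfolding nth_map_def by simp
qed

lemma bij_betw_nth_map:
  assumes "distinct xs" "distinct ys" "length xs = length ys"
  shows "bij_betw (nth_map xs ys) (set xs) (set ys)"
proof -
  have xs: "bij_betw ((!) xs) {..<length xs} (set xs)" using assms(1) by (rule bij_betw_nth) simp_all
  have "bij_betw ((!) ys) {..<length xs} (set ys)" using assms(2,3) by (intro bij_betw_nth) simp_all
  then have "bij_betw (nth_map xs ys \<circ> (!) xs) {..<length xs} (set ys)"
    by (rule bij_betw_cong[THEN iffD1, rotated]) (simp add: nth_map_nth[OF assms(1)])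
  then show ?thesis using bij_betw_comp_iff[OF xs] by blast
qed

lemma order_iso_check_order_iso:
  assumes "order_iso_check le le' xs ys"
  shows "order_iso (set xs) le (set ys) le' (nth_map xs ys)"
proof -
  have distinct: "distinct xs" "distinct ys" "length xs = length ys"
    and le: "\<And>i j. i < length xs \<Longrightarrow> j < length xs \<Longrightarrow> le (xs ! i) (xs ! j) = le' (ys ! i) (ys ! j)"
    using assms unfolding order_iso_check_def list_all_iff by auto
  have "\<forall>a\<in>set xs. \<forall>b\<in>set xs. le a b \<longleftrightarrow> le' (nth_map xs ys a) (nth_map xs ys b)"
  proof (intro ballI)
    fix a b assume a: "a \<in> set xs" and b: "b \<in> set xs"
    obtain i where i: "i < length xs" "a = xs ! i" using a by (auto simp: in_set_conv_nth)
    obtain j where j: "j < length xs" "b = xs ! j" using b by (auto simp: in_set_conv_nth)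
    show "le a b \<longleftrightarrow> le' (nth_map xs ys a) (nth_map xs ys b)"
      using le[OF i(1) j(1)] nth_map_nth[OF distinct(1), of _ ys] i j by simp
  qed
  then show ?thesis unfolding order_iso_def using bij_betw_nth_map[OF distinct] by blast
qed

definition box_increment_int ::
    "(int \<times> int) set \<Rightarrow> (int \<times> int \<Rightarrow> int) \<Rightarrow> int \<Rightarrow> int \<Rightarrow> int \<Rightarrow> bool \<Rightarrow> bool \<Rightarrow> int" where
  "box_increment_int S d D x y u v = D + 2 * d (x,y)
     - (if (x-1,y) \<in> S \<and> \<not> u then D + d (x-1,y) else 0)
     - (if (x,y-1) \<in> S \<and> \<not> v then D + d (x,y-1) else 0)
     - (if (x+1,y) \<in> S \<and> (v \<or> (x+1,y-1) \<notin> S) then d (x+1,y) else 0)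
     - (if (x,y+1) \<in> S \<and> (u \<or> (x-1,y+1) \<notin> S) then d (x,y+1) else 0)"

lemma box_increment_of_int:
  assumes D: "D \<noteq> 0"
  shows "box_increment S (\<lambda>p. of_int (d p) / of_int D) x y u v =
         of_int (box_increment_int S d D x y u v) / of_int D"
proof -
  have e: "(if P then 1 + of_int k / of_int D else 0) = (of_int (if P then D + k else 0) :: real) / of_int D"
    for P k
    using D by (cases P) (simp_all add: field_simps)
  have e2: "(if P then of_int k / of_int D else 0) = (of_int (if P then k else 0) :: real) / of_int D" for P k
    by (cases P) simp_all
  have gen: "1 + 2 * (of_int a / of_int D) - of_int b1 / of_int D - of_int b2 / of_int D
      - of_int b3 / of_int D - of_int b4 / of_int D
      = (of_int (D + 2 * a - b1 - b2 - b3 - b4) :: real) / of_int D" for a b1 b2 b3 b4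
    using D by (simp add: field_simps)
  show ?thesis unfolding box_increment_def e e2 gen box_increment_int_def ..
qed

definition check_box_increments :: "(int \<times> int) list \<Rightarrow> (int \<times> int \<Rightarrow> int) \<Rightarrow> int \<Rightarrow> bool" where
  "check_box_increments S d D = list_all (\<lambda>(x,y). list_all (\<lambda>u. list_all (\<lambda>v.
      (u \<longrightarrow> (x-1,y+1) \<in> set S) \<longrightarrow> (v \<longrightarrow> (x+1,y-1) \<in> set S) \<longrightarrow> box_increment_int (set S) d D x y u v = 0)
      [False, True]) [False, True]) S"

definition check_unit_steps :: "(int \<times> int) list \<Rightarrow> bool" where
  "check_unit_steps S = list_all (\<lambda>(a,b). list_all (\<lambda>(a',b'). grid_le (a,b) (a',b') \<and> (a,b) \<noteq> (a',b') \<longrightarrow>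
      (((a+1,b)\<in>set S \<and> grid_le (a+1,b) (a',b')) \<or> ((a,b+1)\<in>set S \<and> grid_le (a,b+1) (a',b'))) \<and>
      (((a'-1,b')\<in>set S \<and> grid_le (a,b) (a'-1,b')) \<or> ((a',b'-1)\<in>set S \<and> grid_le (a,b) (a',b'-1)))) S) S"

lemma unit_step_region_if_check:
  assumes "check_unit_steps S"
  shows "unit_step_region (set S)"
proof
  fix a b a' b' assume "(a,b) \<in> set S" "(a',b') \<in> set S" "grid_le (a,b) (a',b')" "(a,b) \<noteq> (a',b')"
  then show "((a+1,b)\<in>set S \<and> grid_le (a+1,b) (a',b')) \<or> ((a,b+1)\<in>set S \<and> grid_le (a,b+1) (a',b'))"
    and "((a'-1,b')\<in>set S \<and> grid_le (a,b) (a'-1,b')) \<or> ((a',b'-1)\<in>set S \<and> grid_le (a,b) (a',b'-1))"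
    using assms unfolding check_unit_steps_def list_all_iff by fastforce+
qed simp

lemma ddeg_toggle_affine_if_checks:
  assumes "check_box_increments S d D" "check_unit_steps S" "D \<noteq> 0"
    and "m \<in> set S" "list_all (grid_le m) S"
  shows "ddeg_toggle_affine (set S) grid_le"
proof (rule unit_step_region.ddeg_toggle_affine_region[OF unit_step_region_if_check[OF assms(2)],
      where c="\<lambda>p. of_int (d p) / of_int D" and m=m])
  fix x y u v
  assume "(x,y) \<in> set S" "u \<Longrightarrow> (x-1,y+1) \<in> set S" "v \<Longrightarrow> (x+1,y-1) \<in> set S"
  then have "box_increment_int (set S) d D x y u v = 0"
    using assms(1) unfolding check_box_increments_def list_all_iff by (cases u; cases v) fastforce+
  then show "box_increment (set S) (\<lambda>p. of_int (d p) / of_int D) x y u v = 0"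
    using box_increment_of_int[OF assms(3)] by simp
qed (use assms(4,5) in \<open>auto simp: list_all_iff\<close>)

definition shift_delta4_list :: "(nat \<times> nat) list" where
  "shift_delta4_list = [(4,4), (3,4), (2,4), (3,3), (1,4), (2,3), (1,3), (2,2), (1,2), (1,1)]"

lemma shift_delta4_eq: "shift_delta4 = set shift_delta4_list"
proof
  show "set shift_delta4_list \<subseteq> shift_delta4" unfolding shift_delta4_list_def shift_delta4_def by auto
  show "shift_delta4 \<subseteq> set shift_delta4_list"
  proof
    fix p assume "p \<in> shift_delta4"
    then obtain i j where p: "p = (i,j)" "1 \<le> i" "i \<le> j" "j \<le> 4" unfolding shift_delta4_def by auto
    have "j = 1 \<or> j = 2 \<or> j = 3 \<or> j = 4" using p by auto
    moreover have "i = 1 \<or> i = 2 \<or> i = 3 \<or> i = 4" using p by auto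
    ultimately show "p \<in> set shift_delta4_list" using p unfolding shift_delta4_list_def by auto
  qed
qed

lemma maximal_first_shift_delta4: "maximal_first prod_le shift_delta4_list" by code_simp

lemma PE6_eq_list: "PE6 = set (order_ideals_list prod_le shift_delta4_list)"
  unfolding PE6_def shift_delta4_eq using order_ideals_list_correct[OF maximal_first_shift_delta4] .

text \<open>P(E6) and P(E7) are drawn as unit-step regions of the grid. E6_grid lists the images of the
  ideals of shift_delta4 in the order in which order_ideals_list enumerates them, so that matching
  positions is an order isomorphism; likewise E7_grid for the ideals of E6_grid, enumerated along
  E6_grid_desc.\<close>
definition E6_grid :: "(int \<times> int) list" where
  "E6_grid = [(0,0), (1,0), (2,0), (3,0), (2,1), (3,1), (4,1), (2,2), (3,2), (4,2), (5,1), (5,2),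
     (4,3), (5,3), (6,3), (7,3)]"

definition E6_grid_desc :: "(int \<times> int) list" where
  "E6_grid_desc = [(7,3), (6,3), (5,3), (4,3), (5,2), (4,2), (5,1), (3,2), (4,1), (2,2), (3,1),
     (2,1), (3,0), (2,0), (1,0), (0,0)]"

definition E7_grid :: "(int \<times> int) list" where
  "E7_grid = [(0,0), (1,0), (2,0), (3,0), (4,0), (3,1), (4,1), (5,1), (3,2), (4,2), (5,2), (6,1),
     (6,2), (5,3), (6,3), (7,1), (7,2), (7,3), (6,4), (7,4), (8,4), (6,5), (7,5), (8,5), (9,5),
     (10,5), (11,5)]"

definition E6_coeffs :: "((int \<times> int) \<times> int) list" where
  "E6_coeffs = [((0,0),-4), ((1,0),-5), ((2,0),-6), ((3,0),-3), ((2,1),-4), ((3,1),-3), ((4,1),-2),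
     ((2,2),-2), ((3,2),-1), ((4,2),0), ((5,1),-1), ((5,2),1), ((4,3),0), ((5,3),3), ((6,3),2),
     ((7,3),1)]"

definition E7_coeffs :: "((int \<times> int) \<times> int) list" where
  "E7_coeffs = [((0,0),-3), ((1,0),-4), ((2,0),-5), ((3,0),-6), ((4,0),-3), ((3,1),-4), ((4,1),-4),
     ((5,1),-3), ((3,2),-2), ((4,2),-2), ((5,2),-2), ((6,1),-2), ((6,2),-1), ((5,3),-1), ((6,3),0),
     ((7,1),-1), ((7,2),0), ((7,3),1), ((6,4),0), ((7,4),2), ((8,4),1), ((6,5),0), ((7,5),2),
     ((8,5),4), ((9,5),3), ((10,5),2), ((11,5),1)]"

definition E6_coeff :: "int \<times> int \<Rightarrow> int" where
  "E6_coeff p = (case map_of E6_coeffs p of Some v \<Rightarrow> v | None \<Rightarrow> 0)"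

definition E7_coeff :: "int \<times> int \<Rightarrow> int" where
  "E7_coeff p = (case map_of E7_coeffs p of Some v \<Rightarrow> v | None \<Rightarrow> 0)"

lemma order_iso_check_E6:
  "order_iso_check (\<subseteq>) grid_le (order_ideals_list prod_le shift_delta4_list) E6_grid"
  by code_simp

lemma ddeg_toggle_affine_E6_grid: "ddeg_toggle_affine (set E6_grid) grid_le"
proof (rule ddeg_toggle_affine_if_checks[where d=E6_coeff and D=3 and m="(0,0)"])
  show "check_box_increments E6_grid E6_coeff 3" by code_simp
  show "check_unit_steps E6_grid" by code_simp
  show "(0,0) \<in> set E6_grid" by code_simp
  show "list_all (grid_le (0,0)) E6_grid" by code_simp
qed simp

lemma ddeg_toggle_affine_PE6: "ddeg_toggle_affine PE6 (\<subseteq>)"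
  unfolding PE6_eq_list
  using ddeg_toggle_affine_order_iso[OF order_iso_check_order_iso[OF order_iso_check_E6]
      ddeg_toggle_affine_E6_grid] .

lemma E6_grid_desc_eq: "set E6_grid = set E6_grid_desc" by code_simp
lemma maximal_first_E6_grid_desc: "maximal_first grid_le E6_grid_desc" by code_simp
lemma order_iso_check_E7:
  "order_iso_check (\<subseteq>) grid_le (order_ideals_list grid_le E6_grid_desc) E7_grid"
  by code_simp

lemma ddeg_toggle_affine_E7_grid: "ddeg_toggle_affine (set E7_grid) grid_le"
proof (rule ddeg_toggle_affine_if_checks[where d=E7_coeff and D=2 and m="(0,0)"])
  show "check_box_increments E7_grid E7_coeff 2" by code_simp
  show "check_unit_steps E7_grid" by code_simp
  show "(0,0) \<in> set E7_grid" by code_simp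
  show "list_all (grid_le (0,0)) E7_grid" by code_simp
qed simp

lemma ddeg_toggle_affine_PE7: "ddeg_toggle_affine PE7 (\<subseteq>)"
proof -
  have iso_E6: "order_iso PE7 (\<subseteq>) (order_ideals (set E6_grid) grid_le) (\<subseteq>)
      (image (nth_map (order_ideals_list prod_le shift_delta4_list) E6_grid))"
    unfolding PE7_def PE6_eq_list
    by (rule order_iso_order_ideals[OF order_iso_check_order_iso[OF order_iso_check_E6]])
  have "order_ideals (set E6_grid) grid_le = set (order_ideals_list grid_le E6_grid_desc)"
    unfolding E6_grid_desc_eq using order_ideals_list_correct[OF maximal_first_E6_grid_desc] .
  then have "ddeg_toggle_affine (order_ideals (set E6_grid) grid_le) (\<subseteq>)"
    using ddeg_toggle_affine_order_iso[OF order_iso_check_order_iso[OF order_iso_check_E7]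
        ddeg_toggle_affine_E7_grid] by simp
  then show ?thesis using ddeg_toggle_affine_order_iso[OF iso_E6] by blast
qed

lemma ddeg_toggle_affine_minuscule_connected:
  assumes "minuscule_connected C le"
  shows "ddeg_toggle_affine C le"
  using assms unfolding minuscule_connected_def
proof (elim disjE exE conjE)
  fix a b assume "1 \<le> a" "1 \<le> b" "poset_isomorphic C le (chain_prod a b) prod_le"
  then show ?thesis using ddeg_toggle_affine_isomorphic ddeg_toggle_affine_chain_prod by blast
next
  fix b assume "poset_isomorphic C le (young_interval b) young_le"
  then show ?thesis using ddeg_toggle_affine_isomorphic ddeg_toggle_affine_young_interval by blast
next
  fix a assume "1 \<le> a" "poset_isomorphic C le (paa_carrier a) (paa_le a)"
  then show ?thesis using ddeg_toggle_affine_isomorphic ddeg_toggle_affine_paa by blast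
next
  assume "poset_isomorphic C le PE6 (\<subseteq>)"
  then show ?thesis using ddeg_toggle_affine_isomorphic ddeg_toggle_affine_PE6 by blast
next
  assume "poset_isomorphic C le PE7 (\<subseteq>)"
  then show ?thesis using ddeg_toggle_affine_isomorphic ddeg_toggle_affine_PE7 by blast
qed

theorem theorem6p2:
  fixes P :: "'a set" and le :: "'a \<Rightarrow> 'a \<Rightarrow> bool"
  assumes "finite P" and "is_poset P le"
    and "\<forall>C\<in>components P le. minuscule_connected C le"
  shows "tCDE P le"
proof (rule tCDE_if_ddeg_toggle_affine[OF assms(2,1)])
  show "ddeg_toggle_affine P le"
    using ddeg_toggle_affine_components[OF assms(1)] ddeg_toggle_affine_minuscule_connected assms(3)
    by blast
qed

end
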